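(* Let $\mathcal M\subset \mathcal M_n(\mathbb R)$ be a compact convex set of irreducible Metzler matrices and let $\tau>0$. Define the cone \[ K_\tau=\overline{\mathrm{co}}\Big(\bigcup_{M\in L^\infty(0,\tau)}R(\tau,M)K\Big). \] Then: (i) $K_\tau$ is positively invariant under every flow, i.e. $R(s,M)K_\tau\subset K_\tau$ for all $s\ge0$ and all $M\in L^\infty(0,s)$; (ii) $K_\tau$ is closed, $K_\tau\setminus\{0\}$ is contained in the interior $K_+$ of $K$, and $K_\tau\setminus\{0\}$ is bounded with respect to Hilbert's projective metric.
   Context: A matrix is Metzler if its off-diagonal entries are nonnegative; it is irreducible if for every partition $\{1,\dots,n\}=I\sqcup J$ into nonempty sets some $m_{ij}$ with $i\in I$, $j\in J$ is positive. $K$ is the nonnegative orthant of $\mathbb R^n$ and $K_+$ the positive orthant. For $s>0$, $L^\infty(0,s)$ is the set of measurable controls $M:[0,s]\to\mathcal M$, and $R(s,M)$ is the resolvent: $R(s,M)x=x_M(s)$ where $\dot x_M=M(\cdot)x_M$, $x_M(0)=x$. $\overline{\mathrm{co}}$ denotes closed convex hull. Hilbert's projective metric on $K_+$ is $d(x,y)=\log\max_{i,j}\frac{x_iy_j}{x_jy_i}$. *)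

theory Defs
  imports "HOL-Analysis.Analysis"
begin

definition nonneg_orthant :: "(real^'n) set" where
  "nonneg_orthant = {x. \<forall>i. 0 \<le> x $ i}"

definition pos_orthant :: "(real^'n) set" where
  "pos_orthant = {x. \<forall>i. 0 < x $ i}"

definition metzler :: "real^'n^'n \<Rightarrow> bool" where
  "metzler A \<longleftrightarrow> (\<forall>i j. i \<noteq> j \<longrightarrow> 0 \<le> A $ i $ j)"

definition irreducible_mat :: "real^'n^'n \<Rightarrow> bool" where
  "irreducible_mat A \<longleftrightarrow>
     (\<forall>I J. I \<noteq> {} \<and> J \<noteq> {} \<and> I \<inter> J = {} \<and> I \<union> J = UNIV \<longrightarrow>
        (\<exists>i\<in>I. \<exists>j\<in>J. 0 < A $ i $ j))"

text \<open>Admissible controls L^infinity(0,s): measurable maps [0,s] -> \<M>.\<close>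
definition controls :: "(real^'n^'n) set \<Rightarrow> real \<Rightarrow> (real \<Rightarrow> real^'n^'n) set" where
  "controls \<M> s = {M. M \<in> borel_measurable (lebesgue_on {0..s}) \<and> (\<forall>t\<in>{0..s}. M t \<in> \<M>)}"

definition is_sol :: "(real \<Rightarrow> real^'n^'n) \<Rightarrow> real \<Rightarrow> real^'n \<Rightarrow> (real \<Rightarrow> real^'n) \<Rightarrow> bool" where
  "is_sol M s x0 x \<longleftrightarrow> continuous_on {0..s} x \<and>
     (\<forall>t\<in>{0..s}. (\<lambda>r. M r *v x r) integrable_on {0..t} \<and>
                  x t = x0 + integral {0..t} (\<lambda>r. M r *v x r))"

definition resolvent :: "real \<Rightarrow> (real \<Rightarrow> real^'n^'n) \<Rightarrow> real^'n \<Rightarrow> real^'n" where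
  "resolvent s M x0 = (THE y. \<exists>x. is_sol M s x0 x \<and> x s = y)"

definition K_tau :: "(real^'n^'n) set \<Rightarrow> real \<Rightarrow> (real^'n) set" where
  "K_tau \<M> \<tau> = closure (convex hull (\<Union>M\<in>controls \<M> \<tau>. resolvent \<tau> M ` nonneg_orthant))"

definition hilbert_dist :: "real^'n \<Rightarrow> real^'n \<Rightarrow> real" where
  "hilbert_dist x y = ln (Max {(x $ i * y $ j) / (x $ j * y $ i) | i j. True})"

end

theory Submission
  imports Defs
begin

text \<open>
  For Metzler coefficients with entries bounded by \<open>B\<close>, a nonnegative solution of
  \<open>x' = M(t) x\<close> loses at most a fixed fraction of each coordinate on short time intervals.
  Compactness and irreducibility give \<open>\<delta> > 0\<close> such that for every proper set \<open>S\<close> of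
  coordinates the total rate from \<open>S\<close> into its complement is at least \<open>\<delta>\<close>; so if the
  coordinates in \<open>S\<close> are bounded below on an interval, some coordinate outside \<open>S\<close> gets a
  proportional lower bound at its end. After \<open>n\<close> such steps in \<open>[0, \<tau>]\<close> every coordinate
  of \<open>R(\<tau>, M) x\<close> is at least \<open>\<rho> max\<^sub>j x\<^sub>j\<close>, while all are at most
  \<open>n exp(n\<^sup>2 B \<tau>) max\<^sub>j x\<^sub>j\<close>. Hence \<open>R(\<tau>, M) K\<close> lies in the closed convex cone
  \<open>{x \<ge> 0. \<forall>i l. x\<^sub>l \<le> C x\<^sub>i}\<close>, which meets the boundary of \<open>K\<close> only in \<open>0\<close> and has
  Hilbert diameter at most \<open>2 ln C\<close>; being closed and convex, it contains \<open>K\<^sub>\<tau>\<close>.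

  Invariance: \<open>R(s, M) R(\<tau>, N) = R(\<tau>, N') R(s, P)\<close>, where \<open>P\<close> runs \<open>N\<close> and then \<open>M\<close> and
  \<open>N'\<close> is the tail of \<open>P\<close> after time \<open>s\<close>. Since \<open>R(s, P)\<close> preserves \<open>K\<close>, the linear
  map \<open>R(s, M)\<close> maps the generating set of \<open>K\<^sub>\<tau>\<close> into itself, hence also its closed
  convex hull.
\<close>

lemma norm_matrix_vector_mult_le:
  fixes A :: "real^'n^'n"
  assumes "\<And>i j. \<bar>A $ i $ j\<bar> \<le> B"
  shows "norm (A *v v) \<le> (real CARD('n) * real CARD('n) * B) * norm v"
proof -
  have "norm (A *v v) \<le> onorm ((*v) A) * norm v"
    by (rule onorm[OF matrix_vector_mul_bounded_linear])
  also have "\<dots> \<le> (real CARD('n) * real CARD('n) * B) * norm v"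
    by (rule mult_right_mono[OF onorm_le_matrix_component[OF assms]]) simp
  finally show ?thesis .
qed

lemma continuous_on_matrix_vector_mult: "continuous_on UNIV (\<lambda>p::((real^'n^'n) \<times> (real^'n)). fst p *v snd p)"
  unfolding matrix_vector_mult_def
  by (intro continuous_on_vec_lambda continuous_intros)

definition bounded_control :: "(real \<Rightarrow> real^'n^'n) \<Rightarrow> real \<Rightarrow> real \<Rightarrow> bool" where
  "bounded_control F s B \<longleftrightarrow> F \<in> borel_measurable (lebesgue_on {0..s}) \<and> (\<forall>r\<in>{0..s}. \<forall>i j. \<bar>F r $ i $ j\<bar> \<le> B)"

lemma bounded_control_norm_le:
  fixes F :: "real \<Rightarrow> real^'n^'n"
  assumes "bounded_control F s B" "r \<in> {0..s}"
  shows "norm (F r *v v) \<le> (real CARD('n) * real CARD('n) * B) * norm v"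
  by (rule norm_matrix_vector_mult_le) (use assms in \<open>auto simp: bounded_control_def\<close>)

lemma bounded_control_nonneg:
  assumes "bounded_control F s B" "0 \<le> s"
  shows "0 \<le> B"
proof -
  have "\<bar>F 0 $ i $ i\<bar> \<le> B" for i using assms by (auto simp: bounded_control_def)
  then show ?thesis by (meson abs_ge_zero order_trans)
qed

lemma integrable_control_action:
  fixes F :: "real \<Rightarrow> real^'n^'n"
  assumes c: "bounded_control F s B" and y: "continuous_on {0..s} y"
  shows "(\<lambda>r. F r *v y r) integrable_on {0..s}"
proof -
  obtain Y where Y: "\<And>r. r \<in> {0..s} \<Longrightarrow> norm (y r) \<le> Y"
    using continuous_on_compact_bound[OF compact_Icc y] by metis
  have m1: "F \<in> borel_measurable (lebesgue_on {0..s})" using c by (simp add: bounded_control_def)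
  have m2: "y \<in> borel_measurable (lebesgue_on {0..s})"
    by (rule continuous_imp_measurable_on_sets_lebesgue[OF y]) simp
  have m: "(\<lambda>r. F r *v y r) \<in> borel_measurable (lebesgue_on {0..s})"
    using borel_measurable_continuous_Pair[OF m1 m2, of "\<lambda>A v. A *v v"] continuous_on_matrix_vector_mult by blast
  show ?thesis
  proof (rule measurable_bounded_by_integrable_imp_integrable[OF m])
    show "(\<lambda>r. (real CARD('n) * real CARD('n) * B) * Y) integrable_on {0..s}" by blast
    fix r assume r: "r \<in> {0..s}"
    have "0 \<le> B" using bounded_control_nonneg[OF c] r by simp
    then have B: "0 \<le> real CARD('n) * real CARD('n) * B" by simp
    show "norm (F r *v y r) \<le> (real CARD('n) * real CARD('n) * B) * Y"
      using bounded_control_norm_le[OF c r, of "y r"] mult_left_mono[OF Y[OF r] B] by linarith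
  qed simp
qed

lemma integrable_control_action_Icc:
  fixes F :: "real \<Rightarrow> real^'n^'n"
  assumes c: "bounded_control F s B" and y: "continuous_on {0..s} y" and "0 \<le> a" "a \<le> b" "b \<le> s"
  shows "(\<lambda>r. F r *v y r) integrable_on {a..b}"
  using integrable_control_action[OF c y] integrable_subinterval_real assms by fastforce

lemma integrable_control_entry_mult:
  fixes F :: "real \<Rightarrow> real^'n^'n"
  assumes c: "bounded_control F s B" and y: "continuous_on {0..s} y" and "0 \<le> a" "a \<le> b" "b \<le> s"
  shows "(\<lambda>r. F r $ i $ j * y r $ j) integrable_on {a..b}"
proof -
  have yc: "continuous_on {0..s} (\<lambda>r. axis j (y r $ j))"
    unfolding axis_def
  proof (intro continuous_on_vec_lambda)
    fix i show "continuous_on {0..s} (\<lambda>x. if i = j then y x $ j else 0)"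
      by (cases "i = j") (auto intro!: continuous_intros y)
  qed
  have "(\<lambda>r. (F r *v axis j (y r $ j)) $ i) integrable_on {a..b}"
    using integrable_linear[OF integrable_control_action_Icc[OF c yc assms(3-5)] bounded_linear_vec_nth[of i]]
    by (simp add: o_def)
  moreover have "(F r *v axis j (y r $ j)) $ i = F r $ i $ j * y r $ j" for r
    by (simp add: matrix_vector_mult_def axis_def if_distrib cong: if_cong)
  ultimately show ?thesis by simp
qed

lemma has_integral_power_Icc0:
  assumes "0 \<le> t"
  shows "((\<lambda>r::real. r^k) has_integral t^(Suc k) / real (Suc k)) {0..t}"
proof -
  have "((\<lambda>r::real. r^Suc k / real (Suc k)) has_vector_derivative r^k) (at r within {0..t})" for r
  proof -
    have "((\<lambda>r::real. r^Suc k / real (Suc k)) has_real_derivative real (Suc k) * r ^ (Suc k - Suc 0) / real (Suc k)) (at r)"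
      by (intro DERIV_cdivide DERIV_pow)
    then have "((\<lambda>r::real. r^Suc k / real (Suc k)) has_real_derivative r^k) (at r)"
      by (simp del: of_nat_Suc)
    then show ?thesis
      unfolding has_real_derivative_iff_has_vector_derivative[symmetric]
      by (rule has_field_derivative_at_within)
  qed
  from fundamental_theorem_of_calculus[OF assms this] show ?thesis by simp
qed

lemma power_div_fact_tendsto_zero: "(\<lambda>k. c * (x::real)^k / fact k) \<longlonglongrightarrow> 0"
proof -
  have "(\<lambda>k. x^k /\<^sub>R fact k) \<longlonglongrightarrow> 0"
    using summable_LIMSEQ_zero[OF sums_summable[OF exp_converges]] .
  then have "(\<lambda>k. c * (x^k /\<^sub>R fact k)) \<longlonglongrightarrow> c * 0" by (intro tendsto_mult tendsto_const)
  then show ?thesis by (simp add: divide_inverse ac_simps)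
qed

lemma gronwall_zero:
  fixes u :: "real \<Rightarrow> real"
  assumes cu: "continuous_on {0..s} u" and nn: "\<And>t. t \<in> {0..s} \<Longrightarrow> 0 \<le> u t" and L: "0 \<le> L"
    and le: "\<And>t. t \<in> {0..s} \<Longrightarrow> u t \<le> L * integral {0..t} u"
    and t: "t \<in> {0..s}"
  shows "u t = 0"
proof -
  obtain m where m0: "m \<ge> 0" and m: "\<And>t. t \<in> {0..s} \<Longrightarrow> norm (u t) \<le> m"
    using continuous_on_compact_bound[OF compact_Icc cu] by metis
  have ind: "\<forall>t\<in>{0..s}. u t \<le> m * (L*t)^k / fact k" for k
  proof (induction k)
    case 0 then show ?case using m by (force simp: abs_le_iff)
  next
    case (Suc k)
    show ?case
    proof
      fix t assume t: "t \<in> {0..s}"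
      have ui: "u integrable_on {0..t}"
        using integrable_continuous_real[OF continuous_on_subset[OF cu]] t by auto
      have t0: "0 \<le> t" using t by auto
      have pi: "((\<lambda>r. (m * L^k / fact k) * r^k) has_integral (m * L^k / fact k) * (t^(Suc k) / real (Suc k))) {0..t}"
        by (rule has_integral_mult_right[OF has_integral_power_Icc0[OF t0]])
      have "integral {0..t} u \<le> integral {0..t} (\<lambda>r. (m * L^k / fact k) * r^k)"
        using Suc.IH t by (intro integral_le[OF ui has_integral_integrable[OF pi]]) (auto simp: power_mult_distrib mult.assoc)
      also have "\<dots> = (m * L^k / fact k) * (t^(Suc k) / real (Suc k))"
        using pi by (rule integral_unique)
      finally have "L * integral {0..t} u \<le> L * ((m * L^k / fact k) * (t^(Suc k) / real (Suc k)))"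
        using L by (rule mult_left_mono)
      also have "\<dots> = m * (L*t)^Suc k / fact (Suc k)"
        by (simp add: power_mult_distrib field_simps del: of_nat_Suc)
      finally show "u t \<le> m * (L*t)^Suc k / fact (Suc k)" using le[OF t] by linarith
    qed
  qed
  have "u t \<le> 0"
    using ind t by (intro LIMSEQ_le_const[OF power_div_fact_tendsto_zero[of m "L*t"]]) auto
  then show ?thesis using nn[OF t] by linarith
qed

lemma is_sol_continuous: "is_sol F s x0 x \<Longrightarrow> continuous_on {0..s} x"
  by (simp add: is_sol_def)

lemma is_sol_diff:
  fixes F :: "real \<Rightarrow> real^'n^'n"
  assumes c: "bounded_control F s B" and x: "is_sol F s x0 x" and ab: "0 \<le> a" "a \<le> b" "b \<le> s"
  shows "x b - x a = integral {a..b} (\<lambda>r. F r *v x r)"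
proof -
  have "x b = x0 + integral {0..b} (\<lambda>r. F r *v x r)" "x a = x0 + integral {0..a} (\<lambda>r. F r *v x r)"
    using x ab by (auto simp: is_sol_def)
  moreover have "integral {0..a} (\<lambda>r. F r *v x r) + integral {a..b} (\<lambda>r. F r *v x r) = integral {0..b} (\<lambda>r. F r *v x r)"
    using ab by (intro Henstock_Kurzweil_Integration.integral_combine integrable_control_action_Icc[OF c is_sol_continuous[OF x]]) auto
  ultimately show ?thesis by (simp add: algebra_simps)
qed

lemma is_sol_component_diff:
  fixes F :: "real \<Rightarrow> real^'n^'n"
  assumes c: "bounded_control F s B" and x: "is_sol F s x0 x" and ab: "0 \<le> a" "a \<le> b" "b \<le> s"
  shows "x b $ i - x a $ i = (\<Sum>j\<in>UNIV. integral {a..b} (\<lambda>r. F r $ i $ j * x r $ j))"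
proof -
  have "x b $ i - x a $ i = integral {a..b} (\<lambda>r. F r *v x r) $ i"
    using is_sol_diff[OF assms] by (metis vector_minus_component)
  also have "\<dots> = integral {a..b} (\<lambda>r. (F r *v x r) $ i)"
    by (rule integral_component_eq_cart[symmetric]) (rule integrable_control_action_Icc[OF c is_sol_continuous[OF x] ab])
  also have "\<dots> = integral {a..b} (\<lambda>r. \<Sum>j\<in>UNIV. F r $ i $ j * x r $ j)"
    by (simp add: matrix_vector_mult_def)
  also have "\<dots> = (\<Sum>j\<in>UNIV. integral {a..b} (\<lambda>r. F r $ i $ j * x r $ j))"
    by (rule integral_sum) (auto intro: integrable_control_entry_mult[OF c is_sol_continuous[OF x] ab])
  finally show ?thesis .
qed

lemma integral_control_action_diff:
  fixes F :: "real \<Rightarrow> real^'n^'n"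
  assumes c: "bounded_control F s B" and u: "continuous_on {0..s} u" and v: "continuous_on {0..s} v"
    and t: "t \<in> {0..s}"
  shows "integral {0..t} (\<lambda>r. F r *v u r) - integral {0..t} (\<lambda>r. F r *v v r)
       = integral {0..t} (\<lambda>r. F r *v (u r - v r))"
proof -
  have "(\<lambda>r. F r *v u r) integrable_on {0..t}" "(\<lambda>r. F r *v v r) integrable_on {0..t}"
    using t by (auto intro!: integrable_control_action_Icc[OF c] u v)
  from integral_diff[OF this] show ?thesis by (simp add: matrix_vector_mult_diff_distrib)
qed

lemma norm_integral_control_action_le:
  fixes F :: "real \<Rightarrow> real^'n^'n"
  assumes c: "bounded_control F s B" and u: "continuous_on {0..s} u" and t: "t \<in> {0..s}"
    and g: "g integrable_on {0..t}" and ug: "\<And>r. r \<in> {0..t} \<Longrightarrow> norm (u r) \<le> g r"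
  shows "norm (integral {0..t} (\<lambda>r. F r *v u r)) \<le> real CARD('n) * real CARD('n) * B * integral {0..t} g"
proof -
  define L where "L = real CARD('n) * real CARD('n) * B"
  have L0: "0 \<le> L" unfolding L_def using bounded_control_nonneg[OF c] t by simp
  have "norm (integral {0..t} (\<lambda>r. F r *v u r)) \<le> integral {0..t} (\<lambda>r. L * g r)"
  proof (rule integral_norm_bound_integral)
    show "(\<lambda>r. F r *v u r) integrable_on {0..t}"
      using t by (intro integrable_control_action_Icc[OF c u]) auto
    show "(\<lambda>r. L * g r) integrable_on {0..t}" using integrable_cmul[OF g, of L] by simp
    fix r assume r: "r \<in> {0..t}"
    then have "norm (F r *v u r) \<le> L * norm (u r)"
      unfolding L_def using t by (intro bounded_control_norm_le[OF c]) auto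
    also have "\<dots> \<le> L * g r" using ug[OF r] L0 by (rule mult_left_mono)
    finally show "norm (F r *v u r) \<le> L * g r" .
  qed
  then show ?thesis unfolding L_def by simp
qed

lemma is_sol_unique:
  fixes F :: "real \<Rightarrow> real^'n^'n"
  assumes c: "bounded_control F s B" and x: "is_sol F s x0 x" and x': "is_sol F s x0 x'" and t: "t \<in> {0..s}"
  shows "x t = x' t"
proof -
  define L where "L = real CARD('n) * real CARD('n) * B"
  have L: "0 \<le> L" unfolding L_def using bounded_control_nonneg[OF c] t by simp
  let ?u = "\<lambda>t. norm (x t - x' t)"
  have cd: "continuous_on {0..s} (\<lambda>t. x t - x' t)"
    using is_sol_continuous[OF x] is_sol_continuous[OF x'] by (intro continuous_intros)
  then have cu: "continuous_on {0..s} ?u" by (rule continuous_on_norm)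
  have "?u t = 0" if t: "t \<in> {0..s}" for t
  proof (rule gronwall_zero[OF cu _ L _ t])
    fix t assume t: "t \<in> {0..s}"
    have "x t - x' t = integral {0..t} (\<lambda>r. F r *v x r) - integral {0..t} (\<lambda>r. F r *v x' r)"
      using x x' t by (auto simp: is_sol_def)
    also have "\<dots> = integral {0..t} (\<lambda>r. F r *v (x r - x' r))"
      by (rule integral_control_action_diff[OF c is_sol_continuous[OF x] is_sol_continuous[OF x'] t])
    finally have eq: "x t - x' t = integral {0..t} (\<lambda>r. F r *v (x r - x' r))" .
    have "?u integrable_on {0..t}"
      using integrable_continuous_real[OF continuous_on_subset[OF cu]] t by auto
    from norm_integral_control_action_le[OF c cd t this] show "?u t \<le> L * integral {0..t} ?u"
      using eq unfolding L_def by simp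
  qed simp
  then show ?thesis using t by simp
qed

primrec picard :: "(real \<Rightarrow> real^'n^'n) \<Rightarrow> real^'n \<Rightarrow> nat \<Rightarrow> real \<Rightarrow> real^'n" where
  "picard F x0 0 = (\<lambda>t. x0)"
| "picard F x0 (Suc k) = (\<lambda>t. x0 + integral {0..t} (\<lambda>r. F r *v picard F x0 k r))"

lemma picard_continuous:
  fixes F :: "real \<Rightarrow> real^'n^'n"
  assumes c: "bounded_control F s B"
  shows "continuous_on {0..s} (picard F x0 k)"
proof (induction k)
  case 0 then show ?case by (simp add: continuous_on_const)
next
  case (Suc k)
  show ?case
    using indefinite_integral_continuous_1[OF integrable_control_action[OF c Suc]]
    by (simp add: continuous_on_add continuous_on_const)
qed

lemma picard_diff_bound:
  fixes F :: "real \<Rightarrow> real^'n^'n"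
  assumes c: "bounded_control F s B" and L: "L = real CARD('n) * real CARD('n) * B"
  shows "t \<in> {0..s} \<Longrightarrow> norm (picard F x0 (Suc k) t - picard F x0 k t) \<le> norm x0 * (L*t)^(Suc k) / fact (Suc k)"
proof (induction k arbitrary: t)
  case 0
  have "norm (integral {0..t} (\<lambda>r. F r *v x0)) \<le> L * integral {0..t} (\<lambda>r. norm x0)"
    unfolding L by (rule norm_integral_control_action_le[OF c _ 0]) auto
  then show ?case using 0 by (simp add: ac_simps)
next
  case (Suc k)
  define C where "C = norm x0 * L^Suc k / fact (Suc k)"
  have gi: "((\<lambda>r. C * r^Suc k) has_integral C * (t^Suc (Suc k) / real (Suc (Suc k)))) {0..t}"
    using Suc.prems by (intro has_integral_mult_right has_integral_power_Icc0) auto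
  have "picard F x0 (Suc (Suc k)) t - picard F x0 (Suc k) t
      = integral {0..t} (\<lambda>r. F r *v picard F x0 (Suc k) r) - integral {0..t} (\<lambda>r. F r *v picard F x0 k r)"
    by simp
  also have "\<dots> = integral {0..t} (\<lambda>r. F r *v (picard F x0 (Suc k) r - picard F x0 k r))"
    by (rule integral_control_action_diff[OF c picard_continuous[OF c] picard_continuous[OF c] Suc.prems])
  finally have eq: "picard F x0 (Suc (Suc k)) t - picard F x0 (Suc k) t
      = integral {0..t} (\<lambda>r. F r *v (picard F x0 (Suc k) r - picard F x0 k r))" .
  have "norm (integral {0..t} (\<lambda>r. F r *v (picard F x0 (Suc k) r - picard F x0 k r)))
      \<le> L * integral {0..t} (\<lambda>r. C * r^Suc k)"
    unfolding L
  proof (rule norm_integral_control_action_le[OF c _ Suc.prems])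
    show "continuous_on {0..s} (\<lambda>r. picard F x0 (Suc k) r - picard F x0 k r)"
      by (intro continuous_on_diff picard_continuous[OF c])
    show "(\<lambda>r. C * r^Suc k) integrable_on {0..t}" using gi by blast
    fix r assume "r \<in> {0..t}"
    then show "norm (picard F x0 (Suc k) r - picard F x0 k r) \<le> C * r^Suc k"
      using Suc.IH[of r] Suc.prems by (simp add: C_def power_mult_distrib ac_simps del: picard.simps)
  qed
  also have "\<dots> = norm x0 * (L*t)^(Suc (Suc k)) / fact (Suc (Suc k))"
    using integral_unique[OF gi] by (simp add: C_def power_mult_distrib field_simps del: of_nat_Suc)
  finally show ?case using eq by simp
qed

lemma is_sol_uniform_limit:
  fixes F :: "real \<Rightarrow> real^'n^'n"
  assumes c: "bounded_control F s B" and s0: "0 \<le> s"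
    and p: "\<And>k. continuous_on {0..s} (p k)" and ul: "uniform_limit {0..s} p y sequentially"
    and rec: "\<And>k t. p (Suc k) t = x0 + integral {0..t} (\<lambda>r. F r *v p k r)"
  shows "is_sol F s x0 y"
proof -
  define L where "L = real CARD('n) * real CARD('n) * B"
  have L0: "0 \<le> L" unfolding L_def using bounded_control_nonneg[OF c s0] by simp
  have yc: "continuous_on {0..s} y"
    by (rule uniform_limit_theorem[OF _ ul]) (auto intro: always_eventually p)
  have iy: "(\<lambda>r. F r *v y r) integrable_on {0..t}" if "t \<in> {0..s}" for t
    using that by (intro integrable_control_action_Icc[OF c yc]) auto
  have "y t = x0 + integral {0..t} (\<lambda>r. F r *v y r)" if t: "t \<in> {0..s}" for t
  proof -
    have "(\<lambda>k. integral {0..t} (\<lambda>r. F r *v p k r)) \<longlonglongrightarrow> integral {0..t} (\<lambda>r. F r *v y r)"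
    proof (rule tendstoI)
      fix e :: real assume e: "0 < e"
      define e' where "e' = e / (L * t + 1)"
      have Lt: "0 \<le> L * t" using L0 t by simp
      then have "e * (L * t / (L * t + 1)) < e * 1" using e by (intro mult_strict_left_mono) auto
      then have e': "0 < e'" "L * t * e' < e" using e Lt by (simp_all add: e'_def ac_simps)
      have "\<forall>\<^sub>F k in sequentially. \<forall>r\<in>{0..s}. dist (p k r) (y r) < e'"
        using ul e' unfolding uniform_limit_iff by blast
      then show "\<forall>\<^sub>F k in sequentially.
          dist (integral {0..t} (\<lambda>r. F r *v p k r)) (integral {0..t} (\<lambda>r. F r *v y r)) < e"
      proof (rule eventually_mono)
        fix k assume k: "\<forall>r\<in>{0..s}. dist (p k r) (y r) < e'"
        have "dist (integral {0..t} (\<lambda>r. F r *v p k r)) (integral {0..t} (\<lambda>r. F r *v y r))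
            = norm (integral {0..t} (\<lambda>r. F r *v (p k r - y r)))"
          using integral_control_action_diff[OF c p yc t] by (simp add: dist_norm)
        also have "\<dots> \<le> L * integral {0..t} (\<lambda>r. e')"
          unfolding L_def
        proof (rule norm_integral_control_action_le[OF c _ t])
          show "continuous_on {0..s} (\<lambda>r. p k r - y r)" by (intro continuous_on_diff p yc)
          show "norm (p k r - y r) \<le> e'" if "r \<in> {0..t}" for r
            using k that t by (auto simp: dist_norm less_imp_le)
        qed (rule integrable_const_ivl)
        also have "\<dots> = L * t * e'" using t by simp
        finally show "dist (integral {0..t} (\<lambda>r. F r *v p k r)) (integral {0..t} (\<lambda>r. F r *v y r)) < e"
          using e'(2) by linarith
      qed
    qed
    then have "(\<lambda>k. p (Suc k) t) \<longlonglongrightarrow> x0 + integral {0..t} (\<lambda>r. F r *v y r)"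
      unfolding rec by (intro tendsto_add tendsto_const)
    moreover have "(\<lambda>k. p (Suc k) t) \<longlonglongrightarrow> y t"
      using LIMSEQ_Suc[OF tendsto_uniform_limitI[OF ul t]] .
    ultimately show ?thesis using LIMSEQ_unique by blast
  qed
  then show ?thesis unfolding is_sol_def using yc iy by blast
qed

lemma summable_exp_tail: "summable (\<lambda>k. (a::real)^(Suc k) / fact (Suc k))"
proof -
  have "summable (\<lambda>n. a^n /\<^sub>R fact n)" using sums_summable[OF exp_converges] .
  from summable_ignore_initial_segment[OF this, of 1] show ?thesis by (simp add: divide_inverse ac_simps)
qed

lemma is_sol_exists:
  fixes F :: "real \<Rightarrow> real^'n^'n"
  assumes c: "bounded_control F s B" and s0: "0 \<le> s"
  shows "\<exists>x. is_sol F s x0 x \<and> (\<forall>t\<in>{0..s}. norm (x t) \<le> exp (real CARD('n) * real CARD('n) * B * s) * norm x0)"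
proof -
  define L where "L = real CARD('n) * real CARD('n) * B"
  have L0: "0 \<le> L" unfolding L_def using bounded_control_nonneg[OF c s0] by simp
  define D where "D = (\<lambda>k t. picard F x0 (Suc k) t - picard F x0 k t)"
  define b where "b = (\<lambda>k. norm x0 * ((L * s)^(Suc k) / fact (Suc k)))"
  have sb: "summable b" unfolding b_def by (intro summable_mult summable_exp_tail)
  have Db: "norm (D k t) \<le> b k" if t: "t \<in> {0..s}" for k t
  proof -
    have "norm (D k t) \<le> norm x0 * ((L*t)^(Suc k) / fact (Suc k))"
      using picard_diff_bound[OF c L_def t, of x0 k] unfolding D_def by simp
    also have "\<dots> \<le> norm x0 * ((L * s)^Suc k / fact (Suc k))"
      using t L0 by (intro mult_left_mono divide_right_mono power_mono) auto
    finally show ?thesis unfolding b_def .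
  qed
  define y where "y = (\<lambda>t. x0 + (\<Sum>k. D k t))"
  have "picard F x0 k t = x0 + (\<Sum>m<k. D m t)" for k t
    by (induction k) (simp_all add: D_def del: picard.simps(2))
  then have "picard F x0 = (\<lambda>k t. x0 + (\<Sum>m<k. D m t))" by (intro ext)
  moreover have "uniform_limit {0..s} (\<lambda>k t. x0 + (\<Sum>m<k. D m t)) y sequentially"
    unfolding y_def using Db sb
    by (intro uniform_limit_add uniform_limit_const Weierstrass_m_test[where f=D and M=b and A="{0..s}"])
  ultimately have "uniform_limit {0..s} (picard F x0) y sequentially" by simp
  then have sol: "is_sol F s x0 y"
    by (rule is_sol_uniform_limit[OF c s0 picard_continuous[OF c]]) simp
  have "norm (y t) \<le> exp (L * s) * norm x0" if t: "t \<in> {0..s}" for t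
  proof -
    have "norm (\<Sum>k. D k t) \<le> suminf b" using Db[OF t] sb by (intro norm_suminf_le) auto
    moreover have "suminf b = norm x0 * (\<Sum>k. (L * s)^(Suc k) / fact (Suc k))"
      unfolding b_def by (rule suminf_mult[OF summable_exp_tail])
    moreover have "exp (L * s) = 1 + (\<Sum>k. (L * s)^(Suc k) / fact (Suc k))"
      by (simp add: exp_first_term divide_inverse mult.commute)
    ultimately show ?thesis
      unfolding y_def using norm_triangle_ineq[of x0 "\<Sum>k. D k t"] by (simp add: algebra_simps)
  qed
  then show ?thesis using sol unfolding L_def by blast
qed

lemma resolvent_eqI:
  fixes F :: "real \<Rightarrow> real^'n^'n"
  assumes c: "bounded_control F s B" and s0: "0 \<le> s" and x: "is_sol F s x0 x"
  shows "resolvent s F x0 = x s"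
  unfolding resolvent_def
proof (rule the_equality)
  show "\<exists>x'. is_sol F s x0 x' \<and> x' s = x s" using x by blast
  fix y assume "\<exists>x'. is_sol F s x0 x' \<and> x' s = y"
  then obtain x' where x': "is_sol F s x0 x'" "x' s = y" by blast
  show "y = x s" using is_sol_unique[OF c x'(1) x, of s] x'(2) s0 by simp
qed

lemma resolventE:
  fixes F :: "real \<Rightarrow> real^'n^'n"
  assumes c: "bounded_control F s B" and s0: "0 \<le> s"
  obtains x where "is_sol F s x0 x" "resolvent s F x0 = x s"
    "\<And>t. t \<in> {0..s} \<Longrightarrow> norm (x t) \<le> exp (real CARD('n) * real CARD('n) * B * s) * norm x0"
  using is_sol_exists[OF c s0, of x0] resolvent_eqI[OF c s0] by blast

lemma is_sol_lincomb:
  fixes F :: "real \<Rightarrow> real^'n^'n"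
  assumes c: "bounded_control F s B" and x: "is_sol F s x0 x" and y: "is_sol F s y0 y"
  shows "is_sol F s (a *\<^sub>R x0 + b *\<^sub>R y0) (\<lambda>t. a *\<^sub>R x t + b *\<^sub>R y t)"
  unfolding is_sol_def
proof (intro conjI ballI)
  show "continuous_on {0..s} (\<lambda>t. a *\<^sub>R x t + b *\<^sub>R y t)"
    using is_sol_continuous[OF x] is_sol_continuous[OF y] by (intro continuous_intros)
  fix t assume t: "t \<in> {0..s}"
  have ix: "(\<lambda>r. F r *v x r) integrable_on {0..t}" and iy: "(\<lambda>r. F r *v y r) integrable_on {0..t}"
    using t by (auto intro!: integrable_control_action_Icc[OF c] is_sol_continuous[OF x] is_sol_continuous[OF y])
  have eq: "(\<lambda>r. F r *v (a *\<^sub>R x r + b *\<^sub>R y r)) = (\<lambda>r. a *\<^sub>R (F r *v x r) + b *\<^sub>R (F r *v y r))"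
    by (simp add: matrix_vector_right_distrib matrix_vector_mult_scaleR)
  show "(\<lambda>r. F r *v (a *\<^sub>R x r + b *\<^sub>R y r)) integrable_on {0..t}"
    unfolding eq by (intro integrable_add integrable_cmul ix iy)
  have "integral {0..t} (\<lambda>r. F r *v (a *\<^sub>R x r + b *\<^sub>R y r)) =
        a *\<^sub>R integral {0..t} (\<lambda>r. F r *v x r) + b *\<^sub>R integral {0..t} (\<lambda>r. F r *v y r)"
    unfolding eq by (simp add: integral_add integrable_cmul ix iy)
  moreover have "x t = x0 + integral {0..t} (\<lambda>r. F r *v x r)" "y t = y0 + integral {0..t} (\<lambda>r. F r *v y r)"
    using x y t by (auto simp: is_sol_def)
  ultimately show "a *\<^sub>R x t + b *\<^sub>R y t = (a *\<^sub>R x0 + b *\<^sub>R y0) + integral {0..t} (\<lambda>r. F r *v (a *\<^sub>R x r + b *\<^sub>R y r))"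
    by (simp add: algebra_simps)
qed

lemma resolvent_lincomb:
  fixes F :: "real \<Rightarrow> real^'n^'n"
  assumes c: "bounded_control F s B" and s0: "0 \<le> s"
  shows "resolvent s F (a *\<^sub>R x0 + b *\<^sub>R y0) = a *\<^sub>R resolvent s F x0 + b *\<^sub>R resolvent s F y0"
proof -
  obtain x where x: "is_sol F s x0 x" "resolvent s F x0 = x s" using resolventE[OF c s0] by metis
  obtain y where y: "is_sol F s y0 y" "resolvent s F y0 = y s" using resolventE[OF c s0] by metis
  show ?thesis using resolvent_eqI[OF c s0 is_sol_lincomb[OF c x(1) y(1), of a b]] x y by simp
qed

lemma linear_resolvent:
  fixes F :: "real \<Rightarrow> real^'n^'n"
  assumes c: "bounded_control F s B" and s0: "0 \<le> s"
  shows "linear (resolvent s F)"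
proof (rule linearI)
  fix x y show "resolvent s F (x + y) = resolvent s F x + resolvent s F y"
    using resolvent_lincomb[OF c s0, of 1 x 1 y] by simp
next
  fix a x show "resolvent s F (a *\<^sub>R x) = a *\<^sub>R resolvent s F x"
    using resolvent_lincomb[OF c s0, of a x 0 x] by simp
qed

lemma is_sol_cong:
  fixes F G :: "real \<Rightarrow> real^'n^'n"
  assumes N: "negligible N" and eq: "\<And>r. r \<in> {0..s} - N \<Longrightarrow> F r = G r"
  shows "is_sol F s x0 x \<longleftrightarrow> is_sol G s x0 x"
proof -
  have "\<And>t. t \<in> {0..s} \<Longrightarrow> ((\<lambda>r. F r *v x r) integrable_on {0..t} \<longleftrightarrow> (\<lambda>r. G r *v x r) integrable_on {0..t})
      \<and> integral {0..t} (\<lambda>r. F r *v x r) = integral {0..t} (\<lambda>r. G r *v x r)"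
  proof -
    fix t assume t: "t \<in> {0..s}"
    have e: "\<And>r. r \<in> {0..t} - N \<Longrightarrow> G r *v x r = F r *v x r" using eq t by auto
    have e': "\<And>r. r \<in> {0..t} - N \<Longrightarrow> F r *v x r = G r *v x r" using e by metis
    have i1: "(\<lambda>r. F r *v x r) integrable_on {0..t} \<Longrightarrow> (\<lambda>r. G r *v x r) integrable_on {0..t}"
      by (rule integrable_spike[OF _ N e])
    have i2: "(\<lambda>r. G r *v x r) integrable_on {0..t} \<Longrightarrow> (\<lambda>r. F r *v x r) integrable_on {0..t}"
      by (rule integrable_spike[OF _ N e'])
    have "integral {0..t} (\<lambda>r. F r *v x r) = integral {0..t} (\<lambda>r. G r *v x r)"
      by (rule integral_spike[OF N e])
    then show "?thesis t" using i1 i2 by blast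
  qed
  then show ?thesis unfolding is_sol_def by auto
qed

lemma resolvent_cong:
  fixes F G :: "real \<Rightarrow> real^'n^'n"
  assumes N: "negligible N" and eq: "\<And>r. r \<in> {0..s} - N \<Longrightarrow> F r = G r"
  shows "resolvent s F = resolvent s G"
  unfolding resolvent_def using is_sol_cong[OF assms] by (intro ext) simp

lemma decay_estimate_step:
  fixes u :: "real \<Rightarrow> real"
  assumes cu: "continuous_on {a..b} u" and nn: "\<And>\<tau>. \<tau> \<in> {a..b} \<Longrightarrow> 0 \<le> u \<tau>" and lam: "0 \<le> lam"
    and H: "\<And>r t. a \<le> r \<Longrightarrow> r \<le> t \<Longrightarrow> t \<le> b \<Longrightarrow> - lam * integral {r..t} u \<le> u t - u r"
    and rt: "a \<le> r" "r \<le> t" "t \<le> b" and small: "lam * (t - r) \<le> 1"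
  shows "(1 - lam * (t - r)) * u r \<le> u t"
proof -
  obtain q where q: "q \<in> {r..t}" and qm: "\<And>\<tau>. \<tau> \<in> {r..t} \<Longrightarrow> u \<tau> \<le> u q"
    using continuous_attains_sup[of "{r..t}" u] continuous_on_subset[OF cu] rt by force
  have uq: "0 \<le> u q" using nn q rt by auto
  have iu: "u integrable_on {q..t}"
    using integrable_continuous_real[OF continuous_on_subset[OF cu]] q rt by auto
  have "integral {q..t} u \<le> integral {q..t} (\<lambda>_. u q)"
    using qm q by (intro integral_le[OF iu]) auto
  also have "\<dots> = (t - q) * u q" using q by simp
  finally have "lam * integral {q..t} u \<le> lam * ((t - q) * u q)" using lam by (rule mult_left_mono)
  then have "u q - lam * ((t - q) * u q) \<le> u t" using H[of q t] q rt by auto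
  then have 1: "(1 - lam * (t - q)) * u q \<le> u t" by (simp add: algebra_simps)
  have "lam * (t - q) \<le> lam * (t - r)" using q lam by (intro mult_left_mono) auto
  then have "(1 - lam * (t - r)) * u q \<le> (1 - lam * (t - q)) * u q" using uq by (intro mult_right_mono) auto
  moreover have "(1 - lam * (t - r)) * u r \<le> (1 - lam * (t - r)) * u q"
    using qm[of r] rt small by (intro mult_left_mono) auto
  ultimately show ?thesis using 1 by linarith
qed

lemma decay_estimate:
  fixes u :: "real \<Rightarrow> real"
  assumes cu: "continuous_on {a..b} u" and nn: "\<And>\<tau>. \<tau> \<in> {a..b} \<Longrightarrow> 0 \<le> u \<tau>" and lam: "0 \<le> lam"
    and H: "\<And>r t. a \<le> r \<Longrightarrow> r \<le> t \<Longrightarrow> t \<le> b \<Longrightarrow> - lam * integral {r..t} u \<le> u t - u r"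
    and h: "0 < h" "lam * h \<le> 1/2"
  shows "a \<le> r \<Longrightarrow> r \<le> t \<Longrightarrow> t \<le> b \<Longrightarrow> t - r \<le> real k * h \<Longrightarrow> (1/2)^k * u r \<le> u t"
proof (induction k arbitrary: t)
  case 0 then show ?case by simp
next
  case (Suc k)
  show ?case
  proof (cases "t - r \<le> h")
    case True
    have "lam * (t - r) \<le> lam * h" using True lam by (rule mult_left_mono)
    then have le: "lam * (t - r) \<le> 1/2" using h by linarith
    have "(1 - lam * (t - r)) * u r \<le> u t"
      using decay_estimate_step[OF cu nn lam H] Suc.prems le by auto
    moreover have "(1/2)^Suc k * u r \<le> (1 - lam * (t - r)) * u r"
    proof (rule mult_right_mono)
      have "(1/2::real)^Suc k \<le> 1/2" by (simp add: power_le_one)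
      then show "(1/2)^Suc k \<le> 1 - lam * (t - r)" using le by linarith
      show "0 \<le> u r" using nn Suc.prems by auto
    qed
    ultimately show ?thesis by linarith
  next
    case False
    define r' where "r' = t - h"
    have r': "r \<le> r'" "r' \<le> t" "r' - r \<le> real k * h" using False Suc.prems h by (auto simp: r'_def algebra_simps)
    have IH: "(1/2)^k * u r \<le> u r'" using Suc.IH[of r'] Suc.prems r' by auto
    have "lam * (t - r') \<le> 1/2" using h by (simp add: r'_def)
    then have "(1 - lam * (t - r')) * u r' \<le> u t"
      using decay_estimate_step[OF cu nn lam H, of r' t] Suc.prems r' by auto
    moreover have "(1/2) * u r' \<le> (1 - lam * (t - r')) * u r'"
      using nn[of r'] Suc.prems r' \<open>lam * (t - r') \<le> 1/2\<close> by (intro mult_right_mono) auto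
    moreover have "(1/2)^Suc k * u r \<le> (1/2) * u r'" using IH by simp
    ultimately show ?thesis by linarith
  qed
qed

definition metzler_control :: "(real \<Rightarrow> real^'n^'n) \<Rightarrow> real \<Rightarrow> bool" where
  "metzler_control F s \<longleftrightarrow> (\<forall>r\<in>{0..s}. \<forall>i j. i \<noteq> j \<longrightarrow> 0 \<le> F r $ i $ j)"

lemma is_sol_component_increment_ge:
  fixes F :: "real \<Rightarrow> real^'n^'n"
  assumes c: "bounded_control F s B" and m: "metzler_control F s" and x: "is_sol F s x0 x"
    and rt: "0 \<le> r" "r \<le> t" "t \<le> s" and nn: "\<And>\<tau> j. \<tau> \<in> {r..t} \<Longrightarrow> 0 \<le> x \<tau> $ j"
    and J: "i \<notin> J"
  shows "- B * integral {r..t} (\<lambda>\<tau>. x \<tau> $ i) + (\<Sum>j\<in>J. integral {r..t} (\<lambda>\<tau>. F \<tau> $ i $ j * x \<tau> $ j))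
          \<le> x t $ i - x r $ i"
proof -
  have cx: "continuous_on {0..s} x" by (rule is_sol_continuous[OF x])
  have ci: "continuous_on {0..s} (\<lambda>\<tau>. x \<tau> $ i)" by (intro continuous_intros cx)
  have ixi: "(\<lambda>\<tau>. x \<tau> $ i) integrable_on {r..t}"
    using integrable_continuous_real[OF continuous_on_subset[OF ci]] rt by auto
  have ic: "\<And>j. (\<lambda>\<tau>. F \<tau> $ i $ j * x \<tau> $ j) integrable_on {r..t}"
    by (rule integrable_control_entry_mult[OF c cx rt])
  have J': "J \<subseteq> UNIV - {i}" using J by auto
  have eq: "x t $ i - x r $ i = integral {r..t} (\<lambda>\<tau>. F \<tau> $ i $ i * x \<tau> $ i)
      + ((\<Sum>j\<in>(UNIV - {i}) - J. integral {r..t} (\<lambda>\<tau>. F \<tau> $ i $ j * x \<tau> $ j))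
         + (\<Sum>j\<in>J. integral {r..t} (\<lambda>\<tau>. F \<tau> $ i $ j * x \<tau> $ j)))"
    using is_sol_component_diff[OF c x rt, of i] sum.subset_diff[OF J', of "\<lambda>j. integral {r..t} (\<lambda>\<tau>. F \<tau> $ i $ j * x \<tau> $ j)"]
    by (simp add: sum.remove[of UNIV i])
  have "integral {r..t} (\<lambda>\<tau>. - B * x \<tau> $ i) \<le> integral {r..t} (\<lambda>\<tau>. F \<tau> $ i $ i * x \<tau> $ i)"
  proof (rule integral_le)
    show "(\<lambda>\<tau>. - B * x \<tau> $ i) integrable_on {r..t}" using integrable_cmul[OF ixi, of "- B"] by simp
    show "(\<lambda>\<tau>. F \<tau> $ i $ i * x \<tau> $ i) integrable_on {r..t}" by (rule ic)
    fix \<tau> assume \<tau>: "\<tau> \<in> {r..t}"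
    have "\<bar>F \<tau> $ i $ i\<bar> \<le> B" using c \<tau> rt by (auto simp: bounded_control_def)
    then show "- B * x \<tau> $ i \<le> F \<tau> $ i $ i * x \<tau> $ i"
      using nn[OF \<tau>, of i] by (intro mult_right_mono) auto
  qed
  moreover have "0 \<le> (\<Sum>j\<in>(UNIV - {i}) - J. integral {r..t} (\<lambda>\<tau>. F \<tau> $ i $ j * x \<tau> $ j))"
  proof (rule sum_nonneg)
    fix j assume j: "j \<in> (UNIV - {i}) - J"
    show "0 \<le> integral {r..t} (\<lambda>\<tau>. F \<tau> $ i $ j * x \<tau> $ j)"
    proof (rule integral_nonneg[OF ic])
      fix \<tau> assume \<tau>: "\<tau> \<in> {r..t}"
      have "0 \<le> F \<tau> $ i $ j" using m j \<tau> rt by (auto simp: metzler_control_def)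
      then show "0 \<le> F \<tau> $ i $ j * x \<tau> $ j" using nn[OF \<tau>, of j] by simp
    qed
  qed
  ultimately show ?thesis using eq by simp
qed

lemma is_sol_initial: "is_sol F s x0 x \<Longrightarrow> 0 \<le> s \<Longrightarrow> x 0 = x0"
  by (auto simp: is_sol_def)

lemma is_sol_component_decay_upto:
  fixes F :: "real \<Rightarrow> real^'n^'n"
  assumes c: "bounded_control F s B" and m: "metzler_control F s" and x: "is_sol F s x0 x" and B: "0 \<le> B"
    and T: "T \<le> s" and nn: "\<And>\<tau> j. \<tau> \<in> {0..T} \<Longrightarrow> 0 \<le> x \<tau> $ j"
    and h: "0 < h" "B * h \<le> 1/2"
    and rt: "0 \<le> r" "r \<le> t" "t \<le> T" "t - r \<le> real k * h"
  shows "(1/2)^k * x r $ i \<le> x t $ i"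
proof (rule decay_estimate[where u = "\<lambda>\<tau>. x \<tau> $ i" and a = 0 and b = T and lam = B, OF _ _ B _ h rt])
  show "continuous_on {0..T} (\<lambda>\<tau>. x \<tau> $ i)"
    using T by (intro continuous_intros continuous_on_subset[OF is_sol_continuous[OF x]]) auto
  show "\<And>\<tau>. \<tau> \<in> {0..T} \<Longrightarrow> 0 \<le> x \<tau> $ i" using nn by auto
  fix r t assume "0 \<le> r" "r \<le> t" "t \<le> T"
  then show "- B * integral {r..t} (\<lambda>\<tau>. x \<tau> $ i) \<le> x t $ i - x r $ i"
    using is_sol_component_increment_ge[OF c m x, where J="{}" and r=r and t=t and i=i] T nn by auto
qed

lemma first_nonpos_coordinate_time:
  fixes x :: "real \<Rightarrow> real^'n"
  assumes cx: "continuous_on {0..s} x" and pos: "\<And>j. 0 < x 0 $ j"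
    and t: "t \<in> {0..s}" "x t $ i \<le> 0"
  obtains T i0 where "T \<in> {0..s}" "x T $ i0 \<le> 0" "\<And>\<tau> j. \<tau> \<in> {0..T} \<Longrightarrow> 0 \<le> x \<tau> $ j"
proof -
  define S where "S = (\<Union>j. {0..s} \<inter> (\<lambda>\<tau>. x \<tau> $ j) -` {..0})"
  have clS: "closed S" unfolding S_def
    by (intro closed_UN finite_UNIV ballI continuous_closed_preimage continuous_intros cx) auto
  have tS: "t \<in> S" using t unfolding S_def by blast
  have bS: "bdd_below S" unfolding S_def by (rule bdd_belowI[of _ 0]) auto
  define T where "T = Inf S"
  have TS: "T \<in> S" unfolding T_def using closed_contains_Inf[OF _ bS clS] tS by auto
  have T0: "0 \<le> T" "T \<le> s" using TS unfolding S_def by auto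
  obtain i0 where i0: "x T $ i0 \<le> 0" using TS unfolding S_def by auto
  have below: "0 < x \<tau> $ j" if "\<tau> \<in> {0..T}" "\<tau> < T" for \<tau> j
  proof (rule ccontr)
    assume "\<not> 0 < x \<tau> $ j"
    then have "x \<tau> $ j \<le> 0" by simp
    moreover have "\<tau> \<in> {0..s}" using that T0 by auto
    ultimately have "\<tau> \<in> S" unfolding S_def by blast
    then show False using cInf_lower[OF _ bS, of \<tau>] that(2) unfolding T_def by linarith
  qed
  have at_T: "0 \<le> x T $ j" for j
  proof (rule ccontr)
    assume neg: "\<not> 0 \<le> x T $ j"
    have "continuous_on {0..T} (\<lambda>z. x z $ j)"
      using T0 by (intro continuous_intros continuous_on_subset[OF cx]) auto
    moreover have "x T $ j \<le> 0" "0 \<le> x 0 $ j" using neg pos[of j] by simp_all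
    ultimately have "\<exists>z. 0 \<le> z \<and> z \<le> T \<and> x z $ j = 0"
      using IVT2'[of "\<lambda>z. x z $ j" T 0 0] T0 by blast
    then obtain z where z: "z \<in> {0..T}" "x z $ j = 0" by auto
    have "z \<noteq> T" using neg z(2) by auto
    then have "z < T" using z(1) by simp
    then show False using below[OF z(1), of j] z(2) by simp
  qed
  have nn: "0 \<le> x \<tau> $ j" if "\<tau> \<in> {0..T}" for \<tau> j
  proof (cases "\<tau> = T")
    case True
    then show ?thesis using at_T by simp
  next
    case False
    then show ?thesis using below[OF that, of j] that by simp
  qed
  show thesis by (rule that[OF _ i0 nn]) (use T0 in simp)
qed

lemma is_sol_pos:
  fixes F :: "real \<Rightarrow> real^'n^'n"
  assumes c: "bounded_control F s B" and m: "metzler_control F s" and x: "is_sol F s x0 x" and s0: "0 \<le> s"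
    and pos: "\<And>i. 0 < x0 $ i" and t: "t \<in> {0..s}"
  shows "0 < x t $ i"
proof (rule ccontr)
  assume "\<not> 0 < x t $ i"
  have x0: "x 0 = x0" by (rule is_sol_initial[OF x s0])
  have "\<And>j. 0 < x 0 $ j" using pos x0 by simp
  moreover have "x t $ i \<le> 0" using \<open>\<not> 0 < x t $ i\<close> by simp
  ultimately obtain T i0 where T: "T \<in> {0..s}" and i0: "x T $ i0 \<le> 0"
    and nn: "\<And>\<tau> j. \<tau> \<in> {0..T} \<Longrightarrow> 0 \<le> x \<tau> $ j"
    using first_nonpos_coordinate_time[OF is_sol_continuous[OF x] _ t] by blast
  have B: "0 \<le> B" by (rule bounded_control_nonneg[OF c s0])
  define h where "h = 1 / (2 * (B + 1))"
  have h: "0 < h" "B * h \<le> 1/2" using B by (auto simp: h_def field_simps)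
  obtain k where k: "T < real k * h" using ex_less_of_nat_mult[OF h(1)] by blast
  have "(1/2)^k * x 0 $ i0 \<le> x T $ i0"
    using is_sol_component_decay_upto[OF c m x B _ nn h, where r=0 and t=T and k=k and i=i0] T k by auto
  moreover have "0 < (1/2::real)^k * x 0 $ i0" using pos[of i0] x0 by simp
  ultimately show False using i0 by linarith
qed

lemma is_sol_nonneg:
  fixes F :: "real \<Rightarrow> real^'n^'n"
  assumes c: "bounded_control F s B" and m: "metzler_control F s" and x: "is_sol F s x0 x" and s0: "0 \<le> s"
    and nn0: "\<And>i. 0 \<le> x0 $ i" and t: "t \<in> {0..s}"
  shows "0 \<le> x t $ i"
proof (rule ccontr)
  assume "\<not> 0 \<le> x t $ i"
  then have a: "x t $ i < 0" by simp
  txt \<open>Perturb \<open>x0\<close> by a small positive multiple of \<open>(1, \<dots>, 1)\<close> and use strict positivity.\<close>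
  obtain z where z: "is_sol F s (vec 1) z" using is_sol_exists[OF c s0] by blast
  define w where "w = z t $ i"
  define e where "e = - x t $ i / (2 * (\<bar>w\<bar> + 1))"
  have "0 < 2 * (\<bar>w\<bar> + 1)" by simp
  then have e0: "0 < e" using a unfolding e_def by (intro divide_pos_pos) auto
  have sl: "is_sol F s (1 *\<^sub>R x0 + e *\<^sub>R vec 1) (\<lambda>t. 1 *\<^sub>R x t + e *\<^sub>R z t)"
    by (rule is_sol_lincomb[OF c x z])
  have "0 < (\<lambda>t. 1 *\<^sub>R x t + e *\<^sub>R z t) t $ i"
    by (rule is_sol_pos[OF c m sl s0 _ t]) (use nn0 e0 in \<open>simp add: add_nonneg_pos\<close>)
  then have pos: "0 < x t $ i + e * w" by (simp add: w_def)
  have "e * w \<le> e * \<bar>w\<bar>" using e0 by (intro mult_left_mono) auto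
  also have "e * \<bar>w\<bar> = - x t $ i * (\<bar>w\<bar> / (2 * (\<bar>w\<bar> + 1)))" by (simp add: e_def)
  also have "\<dots> \<le> - x t $ i * (1/2)"
    using a by (intro mult_left_mono) (auto simp: field_simps)
  finally show False using pos a by linarith
qed

lemma is_sol_component_decay:
  fixes F :: "real \<Rightarrow> real^'n^'n"
  assumes c: "bounded_control F s B" and m: "metzler_control F s" and x: "is_sol F s x0 x" and s0: "0 \<le> s"
    and nn0: "\<And>i. 0 \<le> x0 $ i" and B: "0 \<le> B"
    and h: "0 < h" "B * h \<le> 1/2"
    and rt: "0 \<le> r" "r \<le> t" "t \<le> s" "t - r \<le> real k * h"
  shows "(1/2)^k * x r $ i \<le> x t $ i"
  by (rule is_sol_component_decay_upto[OF c m x B order_refl _ h rt]) (rule is_sol_nonneg[OF c m x s0 nn0], auto)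

definition cross_flux :: "real^'n^'n \<Rightarrow> 'n set \<Rightarrow> real" where
  "cross_flux A S = (\<Sum>i\<in>-S. \<Sum>j\<in>S. A $ i $ j)"

lemma exists_term_ge_average:
  fixes g :: "'a \<Rightarrow> real"
  assumes fin: "finite P" and ne: "P \<noteq> {}" and card: "real (card P) \<le> N" and D: "0 \<le> D" and N: "0 < N"
    and sum: "D \<le> sum g P"
  shows "\<exists>p\<in>P. D / N \<le> g p"
proof (rule ccontr)
  assume "\<not> (\<exists>p\<in>P. D / N \<le> g p)"
  then have "\<forall>p\<in>P. g p < D / N" by auto
  then have "sum g P < sum (\<lambda>_. D / N) P" by (intro sum_strict_mono fin ne) auto
  also have "\<dots> = real (card P) * (D / N)" by simp
  also have "\<dots> \<le> N * (D / N)" using card D N by (intro mult_right_mono) auto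
  also have "\<dots> = D" using N by simp
  finally show False using sum by simp
qed

lemma cross_flux_integral_ge:
  fixes F :: "real \<Rightarrow> real^'n^'n"
  assumes c: "bounded_control F s B" and m: "metzler_control F s" and x: "is_sol F s x0 x"
    and ab: "0 \<le> a" "a \<le> b" "b \<le> s" and nn: "\<And>\<tau> j. \<tau> \<in> {a..b} \<Longrightarrow> 0 \<le> x \<tau> $ j"
    and dl: "0 \<le> \<delta>" and irr: "\<And>r. r \<in> {a..b} \<Longrightarrow> \<delta> \<le> cross_flux (F r) S"
    and S: "S \<noteq> {}" "S \<noteq> UNIV" and c0: "0 \<le> cc"
    and cS: "\<And>j r. j \<in> S \<Longrightarrow> r \<in> {a..b} \<Longrightarrow> cc \<le> x r $ j"
  obtains i j where "i \<notin> S" "j \<in> S"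
    "\<delta> * cc * (b - a) / real (CARD('n) * CARD('n)) \<le> integral {a..b} (\<lambda>\<tau>. F \<tau> $ i $ j * x \<tau> $ j)"
proof -
  define N where "N = real (CARD('n) * CARD('n))"
  define g where "g = (\<lambda>i j. integral {a..b} (\<lambda>\<tau>. F \<tau> $ i $ j * x \<tau> $ j))"
  define D where "D = \<delta> * cc * (b - a)"
  have ic: "\<And>i j. (\<lambda>\<tau>. F \<tau> $ i $ j * x \<tau> $ j) integrable_on {a..b}"
    by (rule integrable_control_entry_mult[OF c is_sol_continuous[OF x] ab])
  have ii: "(\<lambda>\<tau>. \<Sum>j\<in>S. F \<tau> $ i $ j * x \<tau> $ j) integrable_on {a..b}" for i
    by (intro integrable_sum ic) auto
  have "(\<Sum>i\<in>-S. \<Sum>j\<in>S. g i j) = (\<Sum>i\<in>-S. integral {a..b} (\<lambda>\<tau>. \<Sum>j\<in>S. F \<tau> $ i $ j * x \<tau> $ j))"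
    unfolding g_def by (intro sum.cong refl integral_sum[symmetric] ic) auto
  also have "\<dots> = integral {a..b} (\<lambda>\<tau>. \<Sum>i\<in>-S. \<Sum>j\<in>S. F \<tau> $ i $ j * x \<tau> $ j)"
    by (intro integral_sum[symmetric] ii) auto
  also have "\<dots> \<ge> integral {a..b} (\<lambda>\<tau>. \<delta> * cc)"
  proof (rule integral_le)
    show "(\<lambda>\<tau>. \<Sum>i\<in>-S. \<Sum>j\<in>S. F \<tau> $ i $ j * x \<tau> $ j) integrable_on {a..b}"
      by (intro integrable_sum ii) auto
    fix \<tau> assume \<tau>: "\<tau> \<in> {a..b}"
    have "\<delta> * cc \<le> cross_flux (F \<tau>) S * cc"
      using irr[OF \<tau>] c0 by (rule mult_right_mono)
    also have "\<dots> = (\<Sum>i\<in>-S. \<Sum>j\<in>S. F \<tau> $ i $ j * cc)" by (simp add: cross_flux_def sum_distrib_right)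
    also have "\<dots> \<le> (\<Sum>i\<in>-S. \<Sum>j\<in>S. F \<tau> $ i $ j * x \<tau> $ j)"
    proof (intro sum_mono mult_left_mono)
      fix i j assume "i \<in> -S" "j \<in> S"
      moreover from this have "i \<noteq> j" by auto
      ultimately show "cc \<le> x \<tau> $ j" "0 \<le> F \<tau> $ i $ j"
        using cS \<tau> m ab by (auto simp: metzler_control_def)
    qed
    finally show "\<delta> * cc \<le> (\<Sum>i\<in>-S. \<Sum>j\<in>S. F \<tau> $ i $ j * x \<tau> $ j)" .
  qed blast
  also have "integral {a..b} (\<lambda>\<tau>. \<delta> * cc) = D" using ab by (simp add: D_def mult_ac)
  finally have sum: "D \<le> (\<Sum>p\<in>(-S) \<times> S. g (fst p) (snd p))"
    unfolding sum.cartesian_product by (simp add: case_prod_beta)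
  have card: "real (card ((-S) \<times> S)) \<le> N"
    unfolding N_def of_nat_le_iff card_cartesian_product[symmetric] by (rule card_mono) auto
  have ne: "(-S) \<times> S \<noteq> {}" using S by auto
  have D0: "0 \<le> D" using dl c0 ab by (simp add: D_def)
  have N0: "0 < N" by (simp add: N_def)
  have "\<exists>p\<in>(-S) \<times> S. D / N \<le> g (fst p) (snd p)"
    by (rule exists_term_ge_average[OF _ ne card D0 N0 sum]) simp
  then obtain p where p: "p \<in> (-S) \<times> S" "D / N \<le> g (fst p) (snd p)" ..
  show thesis
  proof (rule that[of "fst p" "snd p"])
    show "fst p \<notin> S" "snd p \<in> S" using p(1) by (simp_all add: mem_Times_iff)
    show "\<delta> * cc * (b - a) / real (CARD('n) * CARD('n)) \<le> integral {a..b} (\<lambda>\<tau>. F \<tau> $ fst p $ snd p * x \<tau> $ snd p)"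
      using p(2) by (simp add: D_def N_def g_def)
  qed
qed

lemma flux_reaches_new_coordinate:
  fixes F :: "real \<Rightarrow> real^'n^'n"
  assumes c: "bounded_control F s B" and m: "metzler_control F s" and x: "is_sol F s x0 x" and s0: "0 \<le> s"
    and nn0: "\<And>i. 0 \<le> x0 $ i" and B0: "0 \<le> B"
    and dl: "0 < \<delta>" and irr: "\<And>r S. r \<in> {0..s} \<Longrightarrow> S \<noteq> {} \<Longrightarrow> S \<noteq> UNIV \<Longrightarrow> \<delta> \<le> cross_flux (F r) S"
    and h: "0 < h" "B * h \<le> 1/2"
    and ab: "0 \<le> a" "a < b" "b \<le> s" "b - a \<le> real k * h"
    and S: "S \<noteq> {}" "S \<noteq> UNIV" and c0: "0 \<le> cc"
    and cS: "\<And>j r. j \<in> S \<Longrightarrow> r \<in> {a..b} \<Longrightarrow> cc \<le> x r $ j"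
  shows "\<exists>i. i \<notin> S \<and> min (\<delta> * (b - a) / (2 * real (CARD('n) * CARD('n)))) ((1/2)^k * \<delta> / (2 * (B + 1) * real (CARD('n) * CARD('n)))) * cc \<le> x b $ i"
proof -
  define N where "N = real (CARD('n) * CARD('n))"
  have ab_le: "0 \<le> a" "a \<le> b" "b \<le> s" using ab by auto
  have nn: "\<And>\<tau> j. \<tau> \<in> {0..s} \<Longrightarrow> 0 \<le> x \<tau> $ j" by (rule is_sol_nonneg[OF c m x s0 nn0])
  have nn': "\<And>\<tau> j. \<tau> \<in> {a..b} \<Longrightarrow> 0 \<le> x \<tau> $ j" using nn ab_le by auto
  have irr': "\<And>r. r \<in> {a..b} \<Longrightarrow> \<delta> \<le> cross_flux (F r) S" using irr S ab_le by auto
  obtain i j0 where i: "i \<notin> S" and j0: "j0 \<in> S"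
    and G: "\<delta> * cc * (b - a) / N \<le> integral {a..b} (\<lambda>\<tau>. F \<tau> $ i $ j0 * x \<tau> $ j0)"
    using cross_flux_integral_ge[OF c m x ab_le nn' less_imp_le[OF dl] irr' S c0 cS] unfolding N_def by blast
  have "i \<notin> {j0}" using i j0 by auto
  from is_sol_component_increment_ge[OF c m x ab_le nn' this]
  have "- B * integral {a..b} (\<lambda>\<tau>. x \<tau> $ i) + integral {a..b} (\<lambda>\<tau>. F \<tau> $ i $ j0 * x \<tau> $ j0)
        \<le> x b $ i - x a $ i" by simp
  then have low: "- B * integral {a..b} (\<lambda>\<tau>. x \<tau> $ i) + \<delta> * cc * (b - a) / N \<le> x b $ i - x a $ i"
    using G by linarith
  have cxi: "continuous_on {a..b} (\<lambda>\<tau>. x \<tau> $ i)"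
    using ab_le by (intro continuous_intros continuous_on_subset[OF is_sol_continuous[OF x]]) auto
  obtain q where q: "q \<in> {a..b}" and qm: "\<And>\<tau>. \<tau> \<in> {a..b} \<Longrightarrow> x \<tau> $ i \<le> x q $ i"
    using continuous_attains_sup[of "{a..b}" "\<lambda>\<tau>. x \<tau> $ i"] cxi ab_le by force
  define M where "M = x q $ i"
  have M0: "0 \<le> M" using nn q ab_le by (auto simp: M_def)
  have "integral {a..b} (\<lambda>\<tau>. x \<tau> $ i) \<le> integral {a..b} (\<lambda>_. M)"
    using qm by (intro integral_le integrable_continuous_real cxi) (auto simp: M_def)
  also have "\<dots> = (b - a) * M" using ab_le by simp
  finally have iM: "B * integral {a..b} (\<lambda>\<tau>. x \<tau> $ i) \<le> B * ((b - a) * M)" using B0 by (rule mult_left_mono)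
  have xa: "0 \<le> x a $ i" using nn ab_le by auto
  define \<kappa> where "\<kappa> = min (\<delta> * (b - a) / (2 * N)) ((1/2)^k * \<delta> / (2 * (B + 1) * N))"
  txt \<open>Either the loss term is small and the influx from \<open>j0\<close> survives until \<open>b\<close>, or \<open>x_i\<close> was
    already large at some time \<open>q\<close> and the decay estimate carries that to \<open>b\<close>.\<close>
  have "\<kappa> * cc \<le> x b $ i"
  proof (cases "B * ((b - a) * M) \<le> \<delta> * cc * (b - a) / N / 2")
    case True
    then have "\<delta> * cc * (b - a) / N / 2 \<le> x b $ i" using low iM xa by linarith
    moreover have "\<kappa> * cc \<le> \<delta> * (b - a) / (2 * N) * cc" unfolding \<kappa>_def using c0 by (intro mult_right_mono) auto
    ultimately show ?thesis by (simp add: mult_ac)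
  next
    case False
    then have X: "\<delta> * cc / N / 2 * (b - a) < (B * M) * (b - a)" by (simp add: mult_ac)
    have "\<delta> * cc / N / 2 < B * M" by (rule mult_right_less_imp_less[OF X]) (use ab in simp)
    also have "\<dots> \<le> (B + 1) * M" using M0 by (simp add: algebra_simps)
    finally have "\<delta> * cc / N / 2 \<le> M * (B + 1)" by (metis less_imp_le mult.commute)
    then have "\<delta> * cc / N / 2 / (B + 1) \<le> M" using B0 by (subst pos_divide_le_eq) auto
    then have 1: "(1/2)^k * (\<delta> * cc / N / 2 / (B + 1)) \<le> (1/2)^k * M" by (intro mult_left_mono) auto
    have 2: "(1/2)^k * M \<le> x b $ i"
      unfolding M_def using q ab by (intro is_sol_component_decay[OF c m x s0 nn0 B0 h]) auto
    have "\<kappa> * cc \<le> (1/2)^k * \<delta> / (2 * (B + 1) * N) * cc" unfolding \<kappa>_def using c0 by (intro mult_right_mono) auto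
    also have "\<dots> = (1/2)^k * (\<delta> * cc / N / 2 / (B + 1))" by (simp add: mult_ac distrib_left)
    finally show ?thesis using 1 2 by linarith
  qed
  then show ?thesis using i unfolding \<kappa>_def N_def by blast
qed

lemma spreading_step:
  fixes F :: "real \<Rightarrow> real^'n^'n"
  assumes c: "bounded_control F s B" and m: "metzler_control F s" and x: "is_sol F s x0 x" and s0: "0 \<le> s"
    and nn0: "\<And>i. 0 \<le> x0 $ i" and B0: "0 \<le> B"
    and dl: "0 < \<delta>" and irr: "\<And>r S. r \<in> {0..s} \<Longrightarrow> S \<noteq> {} \<Longrightarrow> S \<noteq> UNIV \<Longrightarrow> \<delta> \<le> cross_flux (F r) S"
    and h: "0 < h" "B * h \<le> 1/2"
    and ab: "0 \<le> a" "a < b" "b \<le> s" "b - a \<le> real k * h"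
    and S: "S \<noteq> {}" and c0: "0 \<le> cc" and lower: "\<And>j. j \<in> S \<Longrightarrow> cc \<le> x a $ j"
    and \<rho>: "\<rho> = (1/2)^k * min 1 (min (\<delta> * (b - a) / (2 * real (CARD('n) * CARD('n))))
                                    ((1/2)^k * \<delta> / (2 * (B + 1) * real (CARD('n) * CARD('n)))))"
  obtains S' where "min (Suc (card S)) CARD('n) \<le> card S'" "\<And>j. j \<in> S' \<Longrightarrow> \<rho> * cc \<le> x b $ j"
proof -
  define \<kappa> where "\<kappa> = min (\<delta> * (b - a) / (2 * real (CARD('n) * CARD('n))))
                          ((1/2)^k * \<delta> / (2 * (B + 1) * real (CARD('n) * CARD('n))))"
  have "\<rho> = (1/2)^k * min 1 \<kappa>" unfolding \<rho> \<kappa>_def ..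
  then have \<rho>1: "\<rho> \<le> (1/2)^k" and \<rho>2: "\<rho> \<le> (1/2)^k * \<kappa>" by simp_all
  have cS: "(1/2)^k * cc \<le> x r $ j" if "j \<in> S" "r \<in> {a..b}" for j r
  proof -
    have "(1/2)^k * x a $ j \<le> x r $ j"
      using that ab by (intro is_sol_component_decay[OF c m x s0 nn0 B0 h]) auto
    moreover have "(1/2)^k * cc \<le> (1/2)^k * x a $ j" using lower[OF that(1)] by simp
    ultimately show ?thesis by linarith
  qed
  have old: "\<rho> * cc \<le> x b $ j" if "j \<in> S" for j
  proof -
    have "\<rho> * cc \<le> (1/2)^k * cc" using \<rho>1 c0 by (rule mult_right_mono)
    also have "\<dots> \<le> x b $ j" using cS[OF that, of b] ab by auto
    finally show ?thesis .
  qed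
  show thesis
  proof (cases "S = UNIV")
    case True
    then show ?thesis using that[of S] old by simp
  next
    case False
    obtain i where i: "i \<notin> S" "\<kappa> * ((1/2)^k * cc) \<le> x b $ i"
      using flux_reaches_new_coordinate[OF c m x s0 nn0 B0 dl irr h ab S False _ cS] c0
      unfolding \<kappa>_def by auto
    have "\<rho> * cc \<le> ((1/2)^k * \<kappa>) * cc" using \<rho>2 c0 by (rule mult_right_mono)
    then have new: "\<rho> * cc \<le> x b $ i" using i(2) by (simp add: mult_ac)
    have "card (insert i S) = Suc (card S)" using i by (simp add: card_insert_if)
    then show ?thesis using that[of "insert i S"] old new by auto
  qed
qed

lemma spreading:
  fixes F :: "real \<Rightarrow> real^'n^'n"
  assumes c: "bounded_control F s B" and m: "metzler_control F s" and x: "is_sol F s x0 x" and s0: "0 \<le> s"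
    and nn0: "\<And>i. 0 \<le> x0 $ i" and B0: "0 \<le> B"
    and dl: "0 < \<delta>" and irr: "\<And>r S. r \<in> {0..s} \<Longrightarrow> S \<noteq> {} \<Longrightarrow> S \<noteq> UNIV \<Longrightarrow> \<delta> \<le> cross_flux (F r) S"
    and h: "0 < h" "B * h \<le> 1/2"
    and T: "0 < T" "T \<le> s" and hk: "T / real CARD('n) \<le> real k * h"
    and \<rho>: "\<rho> = (1/2)^k * min 1 (min (\<delta> * (T / real CARD('n)) / (2 * real (CARD('n) * CARD('n))))
                                    ((1/2)^k * \<delta> / (2 * (B + 1) * real (CARD('n) * CARD('n)))))"
  shows "\<rho>^CARD('n) * x0 $ j0 \<le> x T $ i"
proof -
  define n where "n = CARD('n)"
  define d where "d = T / real n"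
  have n0: "0 < n" by (simp add: n_def)
  have d0: "0 < d" using T n0 by (simp add: d_def)
  have \<rho>0: "0 \<le> \<rho>" using dl T B0 by (simp add: \<rho>)
  have "\<exists>S. min (Suc m) n \<le> card S \<and> (\<forall>j\<in>S. \<rho>^m * x0 $ j0 \<le> x (real m * d) $ j)" if "m \<le> n" for m
    using that
  proof (induction m)
    case 0
    have "x 0 = x0" by (rule is_sol_initial[OF x s0])
    then show ?case by (intro exI[of _ "{j0}"]) auto
  next
    case (Suc m)
    then obtain S where S: "min (Suc m) n \<le> card S" "\<forall>j\<in>S. \<rho>^m * x0 $ j0 \<le> x (real m * d) $ j" by auto
    have "real (Suc m) * d \<le> real n * d" using Suc.prems d0 by (intro mult_right_mono) auto
    moreover have "real n * d = T" using n0 by (simp add: d_def)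
    moreover have dd: "real (Suc m) * d - real m * d = d" by (simp add: algebra_simps)
    moreover have "d \<le> real k * h" using hk by (simp add: d_def n_def)
    ultimately have ab: "0 \<le> real m * d" "real m * d < real (Suc m) * d" "real (Suc m) * d \<le> s"
      "real (Suc m) * d - real m * d \<le> real k * h"
      using d0 T by auto
    have "S \<noteq> {}" using S(1) n0 by auto
    moreover have "0 \<le> \<rho>^m * x0 $ j0" using \<rho>0 nn0[of j0] by simp
    moreover have "\<rho> = (1/2)^k * min 1 (min (\<delta> * (real (Suc m) * d - real m * d) / (2 * real (CARD('n) * CARD('n))))
                                    ((1/2)^k * \<delta> / (2 * (B + 1) * real (CARD('n) * CARD('n)))))"
      unfolding dd by (simp add: \<rho> d_def n_def)
    ultimately obtain S' where S': "min (Suc (card S)) n \<le> card S'"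
      "\<And>j. j \<in> S' \<Longrightarrow> \<rho> * (\<rho>^m * x0 $ j0) \<le> x (real (Suc m) * d) $ j"
      using spreading_step[OF c m x s0 nn0 B0 dl irr h ab _ _ S(2)[rule_format]] unfolding n_def by blast
    have "min (Suc (Suc m)) n \<le> card S'" using S(1) S'(1) by (auto simp: min_def split: if_splits)
    then show ?case using S'(2) by (intro exI[of _ S']) (auto simp: mult.assoc)
  qed
  then obtain S where S: "min (Suc n) n \<le> card S" "\<forall>j\<in>S. \<rho>^n * x0 $ j0 \<le> x (real n * d) $ j"
    by blast
  have "S = UNIV" by (rule card_seteq) (use S(1) in \<open>auto simp: n_def\<close>)
  moreover have "real n * d = T" using n0 by (simp add: d_def)
  ultimately show ?thesis using S(2) by (simp add: n_def)
qed

lemma uniform_spreading: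
  fixes B \<delta> T :: real
  assumes B0: "0 \<le> B" and dl: "0 < \<delta>" and T: "0 < T"
  obtains \<rho> :: real where "0 < \<rho>"
    and "\<And>(F :: real \<Rightarrow> real^'n^'n) x0 x i j. bounded_control F T B \<Longrightarrow> metzler_control F T \<Longrightarrow>
          (\<And>r S. r \<in> {0..T} \<Longrightarrow> S \<noteq> {} \<Longrightarrow> S \<noteq> UNIV \<Longrightarrow> \<delta> \<le> cross_flux (F r) S) \<Longrightarrow>
          is_sol F T x0 x \<Longrightarrow> x0 \<in> nonneg_orthant \<Longrightarrow> \<rho> * x0 $ j \<le> x T $ i"
proof -
  define h where "h = 1 / (2 * (B + 1))"
  have h: "0 < h" "B * h \<le> 1/2" using B0 by (auto simp: h_def field_simps)
  obtain k where k: "T / real CARD('n) < real k * h" using ex_less_of_nat_mult[OF h(1)] by blast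
  define \<rho> where "\<rho> = (1/2)^k * min 1 (min (\<delta> * (T / real CARD('n)) / (2 * real (CARD('n) * CARD('n))))
                                          ((1/2)^k * \<delta> / (2 * (B + 1) * real (CARD('n) * CARD('n)))))"
  have \<rho>0: "0 < \<rho>" unfolding \<rho>_def using dl T B0 by simp
  show thesis
  proof (rule that[of "\<rho> ^ CARD('n)"])
    show "0 < \<rho> ^ CARD('n)" using \<rho>0 by simp
  next
    fix F :: "real \<Rightarrow> real^'n^'n" and x0 x i j
    assume c: "bounded_control F T B" and m: "metzler_control F T" and x: "is_sol F T x0 x"
      and irr: "\<And>r S. r \<in> {0..T} \<Longrightarrow> S \<noteq> {} \<Longrightarrow> S \<noteq> UNIV \<Longrightarrow> \<delta> \<le> cross_flux (F r) S"
      and x0: "x0 \<in> nonneg_orthant"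
    show "\<rho> ^ CARD('n) * x0 $ j \<le> x T $ i"
      by (rule spreading[OF c m x _ _ B0 dl irr h T order_refl _ \<rho>_def])
        (use T k x0 in \<open>auto simp: nonneg_orthant_def\<close>)
  qed
qed

lemma compact_entry_bound:
  fixes \<M> :: "(real^'n^'n) set"
  assumes "compact \<M>"
  obtains B where "0 \<le> B" "\<And>A i j. A \<in> \<M> \<Longrightarrow> \<bar>A $ i $ j\<bar> \<le> B"
proof -
  obtain a where a: "\<And>A. A \<in> \<M> \<Longrightarrow> norm A \<le> a"
    using compact_imp_bounded[OF assms] unfolding bounded_iff by blast
  have "\<bar>A $ i $ j\<bar> \<le> max a 0" if "A \<in> \<M>" for A i j
  proof -
    have "\<bar>A $ i $ j\<bar> \<le> norm (A $ i)" by (rule component_le_norm_cart[unfolded real_norm_def])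
    also have "\<dots> \<le> norm A" by (rule Finite_Cartesian_Product.norm_nth_le)
    also have "\<dots> \<le> a" by (rule a[OF that])
    finally show ?thesis by simp
  qed
  then show ?thesis using that[of "max a 0"] by auto
qed

lemma controls_bounded_control:
  fixes \<M> :: "(real^'n^'n) set"
  assumes "M \<in> controls \<M> s" "\<And>A i j. A \<in> \<M> \<Longrightarrow> \<bar>A $ i $ j\<bar> \<le> B"
  shows "bounded_control M s B"
  using assms by (auto simp: controls_def bounded_control_def)

lemma controls_metzler_control:
  fixes \<M> :: "(real^'n^'n) set"
  assumes "M \<in> controls \<M> s" "\<forall>A\<in>\<M>. metzler A"
  shows "metzler_control M s"
  using assms by (auto simp: controls_def metzler_control_def metzler_def)

lemma cross_flux_pos:
  assumes A: "metzler A" "irreducible_mat A" and S: "S \<noteq> {}" "S \<noteq> UNIV"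
  shows "0 < cross_flux A S"
proof -
  have irr: "\<forall>I J. I \<noteq> {} \<and> J \<noteq> {} \<and> I \<inter> J = {} \<and> I \<union> J = UNIV \<longrightarrow> (\<exists>i\<in>I. \<exists>j\<in>J. 0 < A $ i $ j)"
    using A(2) by (simp add: irreducible_mat_def)
  have "-S \<noteq> {}" using S by auto
  then obtain i j where ij: "i \<in> -S" "j \<in> S" "0 < A $ i $ j"
    using irr[rule_format, of "-S" S] S by auto
  have nn: "0 \<le> A $ i' $ j'" if "i' \<in> -S" "j' \<in> S" for i' j'
  proof -
    have "i' \<noteq> j'" using that by auto
    then show ?thesis using A(1) unfolding metzler_def by blast
  qed
  have "A $ i $ j \<le> (\<Sum>j\<in>S. A $ i $ j)" using ij nn by (intro member_le_sum) auto
  also have "\<dots> \<le> cross_flux A S"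
    unfolding cross_flux_def using ij nn by (intro member_le_sum sum_nonneg) auto
  finally show ?thesis using ij by linarith
qed

lemma compact_irreducible_cross_flux_bound:
  fixes \<M> :: "(real^'n^'n) set"
  assumes cp: "compact \<M>" and mi: "\<forall>A\<in>\<M>. metzler A \<and> irreducible_mat A"
  obtains \<delta> where "0 < \<delta>" "\<And>A S. A \<in> \<M> \<Longrightarrow> S \<noteq> {} \<Longrightarrow> S \<noteq> UNIV \<Longrightarrow> \<delta> \<le> cross_flux A S"
proof -
  have "\<forall>\<^sub>F d in at_right 0. \<forall>A\<in>\<M>. d \<le> cross_flux A S"
    if S: "S \<noteq> {}" "S \<noteq> UNIV" for S :: "'n set"
  proof -
    obtain d where d: "0 < d" "\<forall>A\<in>\<M>. d \<le> cross_flux A S"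
    proof (cases "\<M> = {}")
      case True
      then show ?thesis using that[of 1] by simp
    next
      case False
      have "continuous_on \<M> (\<lambda>A. cross_flux A S)" unfolding cross_flux_def by (intro continuous_intros)
      then obtain A0 where "A0 \<in> \<M>" "\<forall>A\<in>\<M>. cross_flux A0 S \<le> cross_flux A S"
        using continuous_attains_inf[OF cp False] by blast
      then show ?thesis using that cross_flux_pos mi S by blast
    qed
    then show ?thesis unfolding eventually_at_right_field by force
  qed
  then have "\<forall>\<^sub>F d in at_right 0. \<forall>S\<in>{S. S \<noteq> {} \<and> S \<noteq> UNIV}. \<forall>A\<in>\<M>. d \<le> cross_flux A S"
    by (intro eventually_ball_finite) auto
  then obtain b :: real where b: "0 < b"
    "\<forall>d>0. d < b \<longrightarrow> (\<forall>S\<in>{S. S \<noteq> {} \<and> S \<noteq> UNIV}. \<forall>A\<in>\<M>. d \<le> cross_flux A S)"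
    unfolding eventually_at_right_field by blast
  have "b / 2 \<le> cross_flux A S" if "A \<in> \<M>" "S \<noteq> {}" "S \<noteq> UNIV" for A S
    using b(2)[rule_format, of "b / 2" S A] b(1) that by simp
  then show thesis using that[of "b / 2"] b(1) by simp
qed

lemma controls_restrict:
  assumes "M \<in> controls \<M> s" "0 \<le> a" "a \<le> s"
  shows "M \<in> controls \<M> a"
proof -
  have "M \<in> borel_measurable (lebesgue_on {0..s})" using assms by (simp add: controls_def)
  then have "M \<in> borel_measurable (lebesgue_on {0..a})" by (rule measurable_restrict_mono) (use assms in auto)
  then show ?thesis using assms by (simp add: controls_def)
qed

lemma controls_shift:
  fixes M :: "real \<Rightarrow> real^'n^'n"
  assumes M: "M \<in> controls \<M> (a + b)" and a: "0 \<le> a" and b: "0 \<le> b"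
  shows "(\<lambda>r. M (r + a)) \<in> controls \<M> b"
proof -
  have m: "M \<in> borel_measurable (lebesgue_on {0..a+b})" using M by (simp add: controls_def)
  define g where "g = (\<lambda>x. if x \<in> {0..a+b} then M x else 0)"
  have g: "g \<in> borel_measurable lebesgue" unfolding g_def by (rule borel_measurable_if_I[OF m]) simp
  have "(\<lambda>x. g (a + 1 *\<^sub>R x)) \<in> borel_measurable lebesgue" by (rule borel_measurable_affine[OF g]) simp
  then have "(\<lambda>x. g (a + x)) \<in> borel_measurable (lebesgue_on {0..b})"
    by (simp add: measurable_restrict_space1)
  moreover have "\<And>x. x \<in> {0..b} \<Longrightarrow> g (a + x) = M (x + a)" using a by (auto simp: g_def add.commute)
  ultimately have "(\<lambda>x. M (x + a)) \<in> borel_measurable (lebesgue_on {0..b})"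
    using measurable_lebesgue_cong[where S="{0..b}" and f="\<lambda>x. g (a + x)" and g="\<lambda>x. M (x + a)"] by blast
  moreover have "\<forall>t\<in>{0..b}. M (t + a) \<in> \<M>" using M a by (auto simp: controls_def)
  ultimately show ?thesis by (simp add: controls_def)
qed

lemma controls_concat:
  fixes M1 M2 :: "real \<Rightarrow> real^'n^'n"
  assumes M1: "M1 \<in> controls \<M> a" and M2: "M2 \<in> controls \<M> b" and a: "0 \<le> a" and b: "0 \<le> b"
  shows "(\<lambda>r. if r \<le> a then M1 r else M2 (r - a)) \<in> controls \<M> (a + b)"
proof -
  have m1: "M1 \<in> borel_measurable (lebesgue_on {0..a})" using M1 by (simp add: controls_def)
  have m2: "M2 \<in> borel_measurable (lebesgue_on {0..b})" using M2 by (simp add: controls_def)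
  define g1 where "g1 = (\<lambda>x. if x \<in> {0..a} then M1 x else 0)"
  have g1: "g1 \<in> borel_measurable lebesgue" unfolding g1_def by (rule borel_measurable_if_I[OF m1]) simp
  define h2 where "h2 = (\<lambda>x. if x \<in> {0..b} then M2 x else 0)"
  have h2: "h2 \<in> borel_measurable lebesgue" unfolding h2_def by (rule borel_measurable_if_I[OF m2]) simp
  have "(\<lambda>x. h2 (- a + 1 *\<^sub>R x)) \<in> borel_measurable lebesgue" by (rule borel_measurable_affine[OF h2]) simp
  then have "(\<lambda>x. h2 (x - a)) \<in> borel_measurable (lebesgue_on {a<..a+b})"
    by (simp add: measurable_restrict_space1)
  then have g2: "(\<lambda>x. if x \<in> {a<..a+b} then h2 (x - a) else 0) \<in> borel_measurable lebesgue"
    by (rule borel_measurable_if_I) simp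
  have "(\<lambda>x. g1 x + (if x \<in> {a<..a+b} then h2 (x - a) else 0)) \<in> borel_measurable lebesgue"
    using g1 g2 by (rule borel_measurable_add)
  moreover have "(\<lambda>x. g1 x + (if x \<in> {a<..a+b} then h2 (x - a) else 0))
      = (\<lambda>x. if x \<in> {0..a+b} then (if x \<le> a then M1 x else M2 (x - a)) else 0)"
    using a b by (auto simp: g1_def h2_def fun_eq_iff)
  ultimately have "(\<lambda>x. if x \<le> a then M1 x else M2 (x - a)) \<in> borel_measurable (lebesgue_on {0..a+b})"
    by (simp add: borel_measurable_if_D)
  moreover have "\<forall>t\<in>{0..a+b}. (if t \<le> a then M1 t else M2 (t - a)) \<in> \<M>"
    using M1 M2 by (auto simp: controls_def)
  ultimately show ?thesis by (simp add: controls_def)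
qed

lemma is_sol_restrict: "is_sol F s x0 x \<Longrightarrow> a \<le> s \<Longrightarrow> is_sol F a x0 x"
  unfolding is_sol_def by (auto intro: continuous_on_subset)

lemma is_sol_shift:
  fixes M :: "real \<Rightarrow> real^'n^'n"
  assumes c: "bounded_control M (a + b) B" and x: "is_sol M (a + b) x0 x" and a: "0 \<le> a" and b: "0 \<le> b"
  shows "is_sol (\<lambda>r. M (r + a)) b (x a) (\<lambda>t. x (t + a))"
  unfolding is_sol_def
proof (intro conjI ballI)
  show "continuous_on {0..b} (\<lambda>t. x (t + a))"
    by (rule continuous_on_compose2[OF is_sol_continuous[OF x]]) (use a in \<open>auto intro!: continuous_intros\<close>)
  fix t assume t: "t \<in> {0..b}"
  define f where "f = (\<lambda>r. M r *v x r)"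
  have fi: "f integrable_on {a..t + a}" unfolding f_def
    using t a by (intro integrable_control_action_Icc[OF c is_sol_continuous[OF x]]) auto
  have "(f has_integral integral {a..t+a} f) {0 + a..t + a}" using integrable_integral[OF fi] by simp
  then have "((f \<circ> (+) a) has_integral integral {a..t+a} f) {0..t}"
    by (simp only: has_integral_shift_Icc_real)
  moreover have "(f \<circ> (+) a) = (\<lambda>r. M (r + a) *v x (r + a))" by (auto simp: f_def add.commute)
  ultimately have hi: "((\<lambda>r. M (r + a) *v x (r + a)) has_integral integral {a..t+a} f) {0..t}" by simp
  then show "(\<lambda>r. M (r + a) *v x (r + a)) integrable_on {0..t}" by blast
  have "x (t + a) - x a = integral {a..t+a} f" unfolding f_def
    using t a by (intro is_sol_diff[OF c x]) auto
  then show "x (t + a) = x a + integral {0..t} (\<lambda>r. M (r + a) *v x (r + a))"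
    using integral_unique[OF hi] by (simp add: algebra_simps)
qed

lemma resolvent_add:
  fixes M :: "real \<Rightarrow> real^'n^'n"
  assumes M: "M \<in> controls \<M> (a + b)" and bnd: "\<And>A i j. A \<in> \<M> \<Longrightarrow> \<bar>A $ i $ j\<bar> \<le> B"
    and a: "0 \<le> a" and b: "0 \<le> b"
  shows "resolvent (a + b) M x0 = resolvent b (\<lambda>r. M (r + a)) (resolvent a M x0)"
proof -
  have c: "bounded_control M (a + b) B" by (rule controls_bounded_control[OF M bnd])
  have ca: "bounded_control M a B" by (rule controls_bounded_control[OF controls_restrict[OF M a] bnd]) (use b in simp)
  have cb: "bounded_control (\<lambda>r. M (r + a)) b B" by (rule controls_bounded_control[OF controls_shift[OF M a b] bnd])
  obtain x where x: "is_sol M (a + b) x0 x" "resolvent (a + b) M x0 = x (a + b)"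
    using resolventE[OF c] a b by (metis add_nonneg_nonneg)
  have "resolvent a M x0 = x a" using resolvent_eqI[OF ca a is_sol_restrict[OF x(1)]] b by simp
  moreover have "resolvent b (\<lambda>r. M (r + a)) (x a) = x (b + a)"
    using resolvent_eqI[OF cb b is_sol_shift[OF c x(1) a b]] by simp
  ultimately show ?thesis using x(2) by (simp add: add.commute)
qed

lemma resolvent_nonneg:
  fixes M :: "real \<Rightarrow> real^'n^'n"
  assumes M: "M \<in> controls \<M> s" and bnd: "\<And>A i j. A \<in> \<M> \<Longrightarrow> \<bar>A $ i $ j\<bar> \<le> B"
    and mz: "\<forall>A\<in>\<M>. metzler A" and s: "0 \<le> s" and x0: "x0 \<in> nonneg_orthant"
  shows "resolvent s M x0 \<in> nonneg_orthant"
proof -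
  have c: "bounded_control M s B" by (rule controls_bounded_control[OF M bnd])
  have m: "metzler_control M s" by (rule controls_metzler_control[OF M mz])
  obtain x where x: "is_sol M s x0 x" "resolvent s M x0 = x s" using resolventE[OF c s] by metis
  have "\<And>i. 0 \<le> x s $ i"
    by (rule is_sol_nonneg[OF c m x(1) s]) (use x0 s in \<open>auto simp: nonneg_orthant_def\<close>)
  then show ?thesis using x(2) by (simp add: nonneg_orthant_def)
qed

definition reachable :: "(real^'n^'n) set \<Rightarrow> real \<Rightarrow> (real^'n) set" where
  "reachable \<M> \<tau> = (\<Union>M\<in>controls \<M> \<tau>. resolvent \<tau> M ` nonneg_orthant)"

lemma K_tau_reachable: "K_tau \<M> \<tau> = closure (convex hull (reachable \<M> \<tau>))"
  by (simp add: K_tau_def reachable_def)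

lemma resolvent_image_reachable:
  fixes \<M> :: "(real^'n^'n) set"
  assumes cp: "compact \<M>" and mz: "\<forall>A\<in>\<M>. metzler A"
    and M: "M \<in> controls \<M> s" and s: "0 \<le> s" and \<tau>: "0 \<le> \<tau>"
  shows "resolvent s M ` reachable \<M> \<tau> \<subseteq> reachable \<M> \<tau>"
proof
  obtain B where bnd: "\<And>A i j. A \<in> \<M> \<Longrightarrow> \<bar>A $ i $ j\<bar> \<le> B" using compact_entry_bound[OF cp] by metis
  fix w assume "w \<in> resolvent s M ` reachable \<M> \<tau>"
  then obtain N x0 where N: "N \<in> controls \<M> \<tau>" and x0: "x0 \<in> nonneg_orthant"
    and w: "w = resolvent s M (resolvent \<tau> N x0)" unfolding reachable_def by blast
  txt \<open>Run \<open>N\<close> and then \<open>M\<close>, and split the concatenated control at time \<open>s\<close> instead of \<open>\<tau>\<close>.\<close>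
  define P where "P = (\<lambda>r. if r \<le> \<tau> then N r else M (r - \<tau>))"
  have P: "P \<in> controls \<M> (\<tau> + s)" unfolding P_def by (rule controls_concat[OF N M \<tau> s])
  have P': "P \<in> controls \<M> (s + \<tau>)" using P by (simp add: add.commute)
  have "resolvent \<tau> P = resolvent \<tau> N"
    by (rule resolvent_cong[of "{}"]) (auto simp: P_def)
  moreover have "resolvent s (\<lambda>r. P (r + \<tau>)) = resolvent s M"
    by (rule resolvent_cong[of "{0}"]) (auto simp: P_def)
  ultimately have "w = resolvent (\<tau> + s) P x0"
    using resolvent_add[OF P bnd \<tau> s] w by simp
  also have "\<dots> = resolvent \<tau> (\<lambda>r. P (r + s)) (resolvent s P x0)"
    using resolvent_add[OF P' bnd s \<tau>] by (simp add: add.commute)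
  finally show "w \<in> reachable \<M> \<tau>"
    using controls_shift[OF P' s \<tau>] resolvent_nonneg[OF controls_restrict[OF P s] bnd mz s x0] \<tau>
    unfolding reachable_def by auto
qed

lemma linear_image_closure_convex_hull_subset:
  fixes f :: "'a::euclidean_space \<Rightarrow> 'a"
  assumes f: "linear f" and U: "f ` U \<subseteq> U"
  shows "f ` closure (convex hull U) \<subseteq> closure (convex hull U)"
proof -
  have "f ` (convex hull U) \<subseteq> closure (convex hull U)"
    using convex_hull_linear_image[OF f, of U] hull_mono[OF U] closure_subset by blast
  moreover have "continuous_on (closure (convex hull U)) f"
    using f by (simp add: linear_conv_bounded_linear linear_continuous_on)
  ultimately show ?thesis by (intro image_closure_subset closed_closure)
qed

definition ratio_cone :: "real \<Rightarrow> (real^'n) set" where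
  "ratio_cone C = {x. (\<forall>i. 0 \<le> x $ i) \<and> (\<forall>i l. x $ l \<le> C * x $ i)}"

lemma closed_ratio_cone: "closed (ratio_cone C)"
  unfolding ratio_cone_def
  by (intro closed_Collect_conj closed_Collect_all closed_Collect_le continuous_intros)

lemma convex_ratio_cone: "convex (ratio_cone C)"
  unfolding convex_def
proof (intro ballI allI impI)
  fix x y :: "real^'n" and u v :: real
  assume xy: "x \<in> ratio_cone C" "y \<in> ratio_cone C" and uv: "0 \<le> u" "0 \<le> v" "u + v = 1"
  have "0 \<le> (u *\<^sub>R x + v *\<^sub>R y) $ i" for i
    using xy uv unfolding ratio_cone_def by simp
  moreover have "(u *\<^sub>R x + v *\<^sub>R y) $ l \<le> C * (u *\<^sub>R x + v *\<^sub>R y) $ i" for i l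
  proof -
    have "u * x $ l \<le> u * (C * x $ i)" "v * y $ l \<le> v * (C * y $ i)"
      using xy uv unfolding ratio_cone_def by (auto intro: mult_left_mono)
    then show ?thesis by (simp add: algebra_simps)
  qed
  ultimately show "u *\<^sub>R x + v *\<^sub>R y \<in> ratio_cone C" unfolding ratio_cone_def by auto
qed

lemma ratio_cone_pos_orthant:
  assumes C: "0 < C"
  shows "ratio_cone C - {0} \<subseteq> pos_orthant"
proof
  fix x assume x: "x \<in> ratio_cone C - {0}"
  then obtain l where "x $ l \<noteq> 0" using vec_eq_iff[of x 0] by auto
  then have l: "0 < x $ l" using x unfolding ratio_cone_def by (simp add: less_le)
  have "0 < x $ i" for i
  proof -
    have "x $ l \<le> C * x $ i" using x unfolding ratio_cone_def by blast
    then have "0 < C * x $ i" using l by linarith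
    then show ?thesis using C by (simp add: zero_less_mult_iff)
  qed
  then show "x \<in> pos_orthant" by (simp add: pos_orthant_def)
qed

lemma hilbert_dist_ratio_cone_le:
  fixes x y :: "real^'n"
  assumes C: "0 < C" and x: "x \<in> ratio_cone C - {0}" and y: "y \<in> ratio_cone C - {0}"
  shows "hilbert_dist x y \<le> 2 * ln C"
proof -
  have xp: "\<And>i. 0 < x $ i" and yp: "\<And>i. 0 < y $ i"
    using ratio_cone_pos_orthant[OF C] x y by (auto simp: pos_orthant_def)
  define R where "R = {(x $ i * y $ j) / (x $ j * y $ i) | i j. True}"
  have fin: "finite R"
  proof -
    have "R = (\<lambda>(i, j). (x $ i * y $ j) / (x $ j * y $ i)) ` UNIV" unfolding R_def by auto
    then show ?thesis by simp
  qed
  have le: "r \<le> C * C" if "r \<in> R" for r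
  proof -
    obtain i j where r: "r = (x $ i * y $ j) / (x $ j * y $ i)" using \<open>r \<in> R\<close> unfolding R_def by auto
    have "x $ i \<le> C * x $ j" "y $ j \<le> C * y $ i" using x y unfolding ratio_cone_def by auto
    then have "x $ i * y $ j \<le> (C * x $ j) * (C * y $ i)"
      using xp yp C by (intro mult_mono) (auto intro: less_imp_le)
    then show ?thesis unfolding r using xp yp by (simp add: divide_le_eq mult_ac)
  qed
  obtain i :: 'n where True by simp
  have "1 = (x $ i * y $ i) / (x $ i * y $ i)" using xp[of i] yp[of i] by simp
  then have "1 \<in> R" unfolding R_def by blast
  then have "1 \<le> Max R" using fin by (rule Max_ge[rotated])
  moreover have "Max R \<le> C * C" using le fin \<open>1 \<in> R\<close> by (subst Max_le_iff) auto
  ultimately have "ln (Max R) \<le> ln (C * C)" by simp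
  then show ?thesis using C unfolding hilbert_dist_def R_def by (simp add: ln_mult)
qed

lemma reachable_in_ratio_cone:
  fixes \<M> :: "(real^'n^'n) set"
  assumes cp: "compact \<M>" and mi: "\<forall>A\<in>\<M>. metzler A \<and> irreducible_mat A" and \<tau>: "0 < \<tau>"
  obtains C where "0 < C" "reachable \<M> \<tau> \<subseteq> ratio_cone C"
proof -
  obtain B where B0: "0 \<le> B" and bnd: "\<And>A i j. A \<in> \<M> \<Longrightarrow> \<bar>A $ i $ j\<bar> \<le> B"
    using compact_entry_bound[OF cp] by metis
  obtain \<delta> where dl: "0 < \<delta>"
    and flux: "\<And>A S. A \<in> \<M> \<Longrightarrow> S \<noteq> {} \<Longrightarrow> S \<noteq> UNIV \<Longrightarrow> \<delta> \<le> cross_flux A S"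
    using compact_irreducible_cross_flux_bound[OF cp mi] by metis
  obtain \<rho> where \<rho>0: "0 < \<rho>"
    and spread: "\<And>(F :: real \<Rightarrow> real^'n^'n) x0 x i j. bounded_control F \<tau> B \<Longrightarrow> metzler_control F \<tau> \<Longrightarrow>
          (\<And>r S. r \<in> {0..\<tau>} \<Longrightarrow> S \<noteq> {} \<Longrightarrow> S \<noteq> UNIV \<Longrightarrow> \<delta> \<le> cross_flux (F r) S) \<Longrightarrow>
          is_sol F \<tau> x0 x \<Longrightarrow> x0 \<in> nonneg_orthant \<Longrightarrow> \<rho> * x0 $ j \<le> x \<tau> $ i"
    using uniform_spreading[OF B0 dl \<tau>] by blast
  define n where "n = real CARD('n)"
  define E where "E = exp (real CARD('n) * real CARD('n) * B * \<tau>)"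
  define C where "C = E * n / \<rho>"
  have C0: "0 < C" unfolding C_def E_def n_def using \<rho>0 by simp
  have "reachable \<M> \<tau> \<subseteq> ratio_cone C"
  proof
    fix y assume "y \<in> reachable \<M> \<tau>"
    then obtain N x0 where N: "N \<in> controls \<M> \<tau>" and x0: "x0 \<in> nonneg_orthant"
      and y: "y = resolvent \<tau> N x0" unfolding reachable_def by blast
    have c: "bounded_control N \<tau> B" by (rule controls_bounded_control[OF N bnd])
    have m: "metzler_control N \<tau>" using controls_metzler_control[OF N] mi by blast
    have irr: "\<And>r S. r \<in> {0..\<tau>} \<Longrightarrow> S \<noteq> {} \<Longrightarrow> S \<noteq> UNIV \<Longrightarrow> \<delta> \<le> cross_flux (N r) S"
      using flux N by (auto simp: controls_def)
    obtain x where x: "is_sol N \<tau> x0 x" "resolvent \<tau> N x0 = x \<tau>"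
      and xb: "\<And>t. t \<in> {0..\<tau>} \<Longrightarrow> norm (x t) \<le> E * norm x0"
      using resolventE[OF c] \<tau> unfolding E_def by (metis less_imp_le)
    have "Max (range (\<lambda>j. x0 $ j)) \<in> range (\<lambda>j. x0 $ j)" by (intro Max_in) auto
    then obtain j0 where "Max (range (\<lambda>j. x0 $ j)) = x0 $ j0" by (metis imageE)
    then have j0: "x0 $ j \<le> x0 $ j0" for j using Max_ge[of "range (\<lambda>j. x0 $ j)" "x0 $ j"] by simp
    have "norm x0 \<le> (\<Sum>j\<in>UNIV. \<bar>x0 $ j\<bar>)" by (rule norm_le_l1_cart)
    also have "\<dots> \<le> n * x0 $ j0"
      using x0 j0 sum_mono[of UNIV "\<lambda>j. \<bar>x0 $ j\<bar>" "\<lambda>_. x0 $ j0"] by (auto simp: n_def nonneg_orthant_def)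
    finally have x0_norm: "norm x0 \<le> n * x0 $ j0" .
    have "y $ l \<le> C * y $ i" for i l
    proof -
      have "y $ l \<le> norm (x \<tau>)" using component_le_norm_cart[of "x \<tau>" l] y x(2) by simp
      also have "\<dots> \<le> E * norm x0" using xb \<tau> by simp
      also have "\<dots> \<le> E * (n * x0 $ j0)" using x0_norm by (intro mult_left_mono) (simp_all add: E_def)
      also have "\<dots> = C * (\<rho> * x0 $ j0)" using \<rho>0 by (simp add: C_def)
      also have "\<dots> \<le> C * y $ i"
        using spread[OF c m irr x(1) x0, of j0 i] C0 y x(2) by (intro mult_left_mono) auto
      finally show ?thesis .
    qed
    moreover have "0 \<le> y $ i" for i
      using is_sol_nonneg[OF c m x(1)] x0 x(2) y \<tau> by (auto simp: nonneg_orthant_def)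
    ultimately show "y \<in> ratio_cone C" unfolding ratio_cone_def by auto
  qed
  then show thesis using that C0 by blast
qed

theorem lemma2:
  fixes \<M> :: "(real^'n^'n) set" and \<tau> :: real
  assumes "compact \<M>" and "convex \<M>"
    and "\<forall>A\<in>\<M>. metzler A \<and> irreducible_mat A"
    and "\<tau> > 0"
  shows "(\<forall>s\<ge>0. \<forall>M\<in>controls \<M> s. resolvent s M ` K_tau \<M> \<tau> \<subseteq> K_tau \<M> \<tau>)
       \<and> closed (K_tau \<M> \<tau>)
       \<and> K_tau \<M> \<tau> - {0} \<subseteq> pos_orthant
       \<and> (\<exists>C. \<forall>x\<in>K_tau \<M> \<tau> - {0}. \<forall>y\<in>K_tau \<M> \<tau> - {0}. hilbert_dist x y \<le> C)"
proof -
  note cp = assms(1) and mi = assms(3) and \<tau> = assms(4)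
  have mz: "\<forall>A\<in>\<M>. metzler A" using mi by blast
  obtain B where bnd: "\<And>A i j. A \<in> \<M> \<Longrightarrow> \<bar>A $ i $ j\<bar> \<le> B" using compact_entry_bound[OF cp] by metis
  obtain C where C: "0 < C" and reach: "reachable \<M> \<tau> \<subseteq> ratio_cone C"
    using reachable_in_ratio_cone[OF cp mi \<tau>] by blast
  have cone: "K_tau \<M> \<tau> \<subseteq> ratio_cone C"
    unfolding K_tau_reachable by (intro closure_minimal hull_minimal reach convex_ratio_cone closed_ratio_cone)
  have "resolvent s M ` K_tau \<M> \<tau> \<subseteq> K_tau \<M> \<tau>" if s: "0 \<le> s" and M: "M \<in> controls \<M> s" for s M
    unfolding K_tau_reachable
    using linear_resolvent[OF controls_bounded_control[OF M bnd] s] resolvent_image_reachable[OF cp mz M s] \<tau>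
    by (intro linear_image_closure_convex_hull_subset) auto
  moreover have "K_tau \<M> \<tau> - {0} \<subseteq> pos_orthant" using cone ratio_cone_pos_orthant[OF C] by blast
  moreover have "\<forall>x\<in>K_tau \<M> \<tau> - {0}. \<forall>y\<in>K_tau \<M> \<tau> - {0}. hilbert_dist x y \<le> 2 * ln C"
    using hilbert_dist_ratio_cone_le[OF C] cone by blast
  ultimately show ?thesis by (auto simp: K_tau_def)
qed

end
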